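(* Let $H$ be a digraph with maximum degree $\Delta$, let $\delta>0$, and let $p=p(n)\in(0,1)$. (a) If $n^{-1/\Delta}\ll p\ll 1$, then as $n\to\infty$, \[ \frac{\Phi_{n,p}(H,\delta)}{n^2p^\Delta\log(1/p)}\le F(H,\delta)+o(1). \] Further, the infimum $F(H,\delta)$ is obtained when $y_1\vee y_2=1$, i.e. restricting the infimum defining $F(H,\delta)$ to points with $\max(y_1,y_2)=1$ does not change its value. (b) Suppose in addition that $H$ is connected and $\Delta$-regular. If $n^{-2/\Delta}\ll p\ll 1$, then \[ \frac{\Phi_{n,p}(H,\delta)}{n^2p^\Delta\log(1/p)}\le \delta^{2/\mathsf{v}(H)}+o(1). \] Combined with part (a), when $n^{-1/\Delta}\ll p\ll 1$ this gives \[ \frac{\Phi_{n,p}(H,\delta)}{n^2p^\Delta\log(1/p)}\le \min\big(F(H,\delta),\delta^{2/\mathsf{v}(H)}\big)+o(1). \]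
   Context: A digraph $H=(\mathsf V,\mathsf E)$ has no self-loops and at most one directed edge $(u,v)$ for each ordered pair $(u,v)$; $\mathsf v(H)=|\mathsf V(H)|$, $\mathsf e(H)=|\mathsf E(H)|$. The degree of a vertex is the sum of its in-degree and out-degree; $\Delta$ is the maximum degree, and $H$ is $\Delta$-regular if every vertex has degree $\Delta$. $\mathcal Q_n$ is the set of $n\times n$ real matrices with zero diagonal and all entries in $[0,1]$. For $Q\in\mathcal Q_n$, $t(H,Q)=n^{-\mathsf v(H)}\sum_{\phi:\mathsf V(H)\to[n]}\prod_{(i,j)\in\mathsf E(H)}Q(\phi(i),\phi(j))$. For $x\in[0,1]$, $I_p(x)=x\log\frac xp+(1-x)\log\frac{1-x}{1-p}$ (with $0\log 0=0$), and $I_p(Q)=\sum_{i\ne j}I_p(Q(i,j))$. Define \[ \Phi_{n,p}(H,\delta)=\inf_{Q\in\mathcal Q_n}\{I_p(Q): t(H,Q)\ge(1+\delta)p^{\mathsf e(H)}\}. \] $H^*$ is the induced subgraph of $H$ on the vertices of degree $\Delta$, and $\mathcal S_H$ is the collection of all independent sets of $H^*$ (including the empty set). For $S\subseteq\mathsf V(H)$: $\mathsf N^+(S)$ is the set of $v\notin S$ with $(u,v)\in\mathsf E(H)$ for some $u\in S$; $\mathsf N^-(S)$ is the set of $v\notin S$ with $(v,u)\in\mathsf E(H)$ for some $u\in S$; $A_S=|\mathsf N^+(S)|$, $B_S=|\mathsf N^-(S)|$. Let $\mathsf v^+(S)$ be the number of vertices of $S$ having no in-neighbours in $H$, $\mathsf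 v^-(S)$ the number of vertices of $S$ having no out-neighbours in $H$, and $\mathsf v^{\pm}(S)$ the number of vertices of $S$ having both an in-neighbour and an out-neighbour. Set \[ f_H(x_1,x_2,y_1,y_2)=\sum_{S\in\mathcal S_H}x_1^{\mathsf v^+(S)}x_2^{\mathsf v^-(S)}(x_1\wedge x_2)^{\mathsf v^{\pm}(S)}y_1^{A_S}y_2^{B_S}, \] \[ F(H,\delta)=\inf_{x_1,x_2\ge0,\ 0\le y_1,y_2\le1}\{x_1y_1+x_2y_2: f_H(x_1,x_2,y_1,y_2)=1+\delta\}. \] Here $a\wedge b=\min(a,b)$, $a\vee b=\max(a,b)$, and $f\ll g$ means $f/g\to0$ as $n\to\infty$. *)

theory Defs
  imports "HOL-Analysis.Analysis" "HOL-Library.FuncSet"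
begin

definition digraph :: "'v set \<Rightarrow> ('v \<times> 'v) set \<Rightarrow> bool" where
  "digraph V E \<longleftrightarrow> finite V \<and> E \<subseteq> V \<times> V \<and> (\<forall>v. (v, v) \<notin> E)"

definition indeg :: "('v \<times> 'v) set \<Rightarrow> 'v \<Rightarrow> nat" where
  "indeg E v = card {u. (u, v) \<in> E}"

definition outdeg :: "('v \<times> 'v) set \<Rightarrow> 'v \<Rightarrow> nat" where
  "outdeg E v = card {u. (v, u) \<in> E}"

definition deg :: "('v \<times> 'v) set \<Rightarrow> 'v \<Rightarrow> nat" where
  "deg E v = indeg E v + outdeg E v"

definition maxdeg :: "'v set \<Rightarrow> ('v \<times> 'v) set \<Rightarrow> nat" where
  "maxdeg V E = Max (deg E ` V)"

definition regular :: "'v set \<Rightarrow> ('v \<times> 'v) set \<Rightarrow> nat \<Rightarrow> bool" where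
  "regular V E d \<longleftrightarrow> (\<forall>v\<in>V. deg E v = d)"

definition connected_digraph :: "'v set \<Rightarrow> ('v \<times> 'v) set \<Rightarrow> bool" where
  "connected_digraph V E \<longleftrightarrow> (\<forall>u\<in>V. \<forall>v\<in>V. (u, v) \<in> (E \<union> E\<inverse>)\<^sup>*)"

text \<open>Matrices Q in \<open>\<Q>_n\<close>, indexed by {0..<n}.\<close>
definition Qmats :: "nat \<Rightarrow> (nat \<Rightarrow> nat \<Rightarrow> real) set" where
  "Qmats n = {Q. (\<forall>i<n. Q i i = 0) \<and> (\<forall>i<n. \<forall>j<n. 0 \<le> Q i j \<and> Q i j \<le> 1)}"

definition hom_density :: "'v set \<Rightarrow> ('v \<times> 'v) set \<Rightarrow> nat \<Rightarrow> (nat \<Rightarrow> nat \<Rightarrow> real) \<Rightarrow> real" where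
  "hom_density V E n Q = (1 / real n ^ card V) *
     (\<Sum>\<phi> \<in> PiE V (\<lambda>_. {..<n}). \<Prod>e\<in>E. Q (\<phi> (fst e)) (\<phi> (snd e)))"

definition xlog :: "real \<Rightarrow> real \<Rightarrow> real" where
  "xlog x a = (if x = 0 then 0 else x * ln (x / a))"

definition Ip :: "real \<Rightarrow> real \<Rightarrow> real" where
  "Ip p x = xlog x p + xlog (1 - x) (1 - p)"

definition Ip_mat :: "nat \<Rightarrow> real \<Rightarrow> (nat \<Rightarrow> nat \<Rightarrow> real) \<Rightarrow> real" where
  "Ip_mat n p Q = (\<Sum>i<n. \<Sum>j\<in>{..<n} - {i}. Ip p (Q i j))"

definition Phi :: "'v set \<Rightarrow> ('v \<times> 'v) set \<Rightarrow> nat \<Rightarrow> real \<Rightarrow> real \<Rightarrow> real" where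
  "Phi V E n p \<delta> = Inf {Ip_mat n p Q | Q. Q \<in> Qmats n \<and>
       hom_density V E n Q \<ge> (1 + \<delta>) * p ^ card E}"

definition Vstar :: "'v set \<Rightarrow> ('v \<times> 'v) set \<Rightarrow> 'v set" where
  "Vstar V E = {v\<in>V. deg E v = maxdeg V E}"

definition indep_sets :: "'v set \<Rightarrow> ('v \<times> 'v) set \<Rightarrow> 'v set set" where
  "indep_sets V E = {S. S \<subseteq> Vstar V E \<and> (\<forall>u\<in>S. \<forall>v\<in>S. (u, v) \<notin> E)}"

definition Nout :: "'v set \<Rightarrow> ('v \<times> 'v) set \<Rightarrow> 'v set \<Rightarrow> 'v set" where
  "Nout V E S = {v\<in>V. v \<notin> S \<and> (\<exists>u\<in>S. (u, v) \<in> E)}"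

definition Nin :: "'v set \<Rightarrow> ('v \<times> 'v) set \<Rightarrow> 'v set \<Rightarrow> 'v set" where
  "Nin V E S = {v\<in>V. v \<notin> S \<and> (\<exists>u\<in>S. (v, u) \<in> E)}"

definition vplus :: "('v \<times> 'v) set \<Rightarrow> 'v set \<Rightarrow> nat" where
  "vplus E S = card {v\<in>S. \<not> (\<exists>u. (u, v) \<in> E)}"

definition vminus :: "('v \<times> 'v) set \<Rightarrow> 'v set \<Rightarrow> nat" where
  "vminus E S = card {v\<in>S. \<not> (\<exists>u. (v, u) \<in> E)}"

definition vpm :: "('v \<times> 'v) set \<Rightarrow> 'v set \<Rightarrow> nat" where
  "vpm E S = card {v\<in>S. (\<exists>u. (u, v) \<in> E) \<and> (\<exists>u. (v, u) \<in> E)}"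

definition fH :: "'v set \<Rightarrow> ('v \<times> 'v) set \<Rightarrow> real \<Rightarrow> real \<Rightarrow> real \<Rightarrow> real \<Rightarrow> real" where
  "fH V E x1 x2 y1 y2 = (\<Sum>S\<in>indep_sets V E.
      x1 ^ vplus E S * x2 ^ vminus E S * (min x1 x2) ^ vpm E S *
      y1 ^ card (Nout V E S) * y2 ^ card (Nin V E S))"

definition FH :: "'v set \<Rightarrow> ('v \<times> 'v) set \<Rightarrow> real \<Rightarrow> real" where
  "FH V E \<delta> = Inf {x1 * y1 + x2 * y2 | x1 x2 y1 y2.
      x1 \<ge> 0 \<and> x2 \<ge> 0 \<and> 0 \<le> y1 \<and> y1 \<le> 1 \<and> 0 \<le> y2 \<and> y2 \<le> 1 \<and>
      fH V E x1 x2 y1 y2 = 1 + \<delta>}"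

definition FH_edge :: "'v set \<Rightarrow> ('v \<times> 'v) set \<Rightarrow> real \<Rightarrow> real" where
  "FH_edge V E \<delta> = Inf {x1 * y1 + x2 * y2 | x1 x2 y1 y2.
      x1 \<ge> 0 \<and> x2 \<ge> 0 \<and> 0 \<le> y1 \<and> y1 \<le> 1 \<and> 0 \<le> y2 \<and> y2 \<le> 1 \<and>
      max y1 y2 = 1 \<and> fH V E x1 x2 y1 y2 = 1 + \<delta>}"

definition rate :: "'v set \<Rightarrow> ('v \<times> 'v) set \<Rightarrow> real \<Rightarrow> nat \<Rightarrow> real \<Rightarrow> real" where
  "rate V E \<delta> n p = Phi V E n p \<delta> / (real n ^ 2 * p ^ maxdeg V E * ln (1 / p))"

end

(*
  Every bound comes from an explicit matrix: entries p except on a planted set R of entries 1.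
  Its cost is at most |R| ln (1/p), and a map V -> [n] sending no edge to the diagonal has weight
  p to the number of edges it sends outside R.

  (a) Given x1, x2, y1, y2 with f_H(x, y) > 1 + delta, plant 1 on the rectangles
  [0, x1 n p^Delta) x (last y1 n columns) and (last y2 n rows) x [0, x2 n p^Delta).  For every
  independent set S of H^* map S into the hub [0, x n p^Delta) and N^+(S), N^-(S) into the last
  columns: the Delta |S| edges at S all hit planted entries, and the maps of this block contribute
  about p^|E| times the term of S in f_H.  Summing over S gives density > (1 + delta) p^|E| at cost
  about (x1 y1 + x2 y2) n^2 p^Delta ln (1/p).

  (b) For regular H plant a clique of size c n p^(Delta/2) with c^|V| > delta; since
  2 |E| = |V| Delta its maps contribute c^|V| p^|E|, at cost c^2 n^2 p^Delta ln (1/p).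

  Restricting to max y1 y2 = 1 is free: x -> s x, y -> y / s keeps the cost and cannot decrease
  f_H, since |S| <= |N^+(S)| + |N^-(S)| for independent sets of H^*.
*)
theory Submission
  imports Defs
begin

section \<open>Entropy cost of planted matrices\<close>

lemma xlog_ge_diff:
  assumes "0 \<le> x" "0 < a"
  shows "x - a \<le> xlog x a"
proof (cases "x = 0")
  case True
  then show ?thesis using assms by (simp add: xlog_def)
next
  case False
  then have "x > 0" using assms by simp
  have "ln (a / x) \<le> a / x - 1" using \<open>x > 0\<close> assms by (intro ln_le_minus_one) simp
  then have "x * (1 - a / x) \<le> x * ln (x / a)"
    using \<open>x > 0\<close> assms by (intro mult_left_mono) (simp_all add: ln_div)
  then show ?thesis using False \<open>x > 0\<close> by (simp add: xlog_def algebra_simps)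
qed

lemma Ip_nonneg:
  assumes "0 < p" "p < 1" "0 \<le> x" "x \<le> 1"
  shows "0 \<le> Ip p x"
  using xlog_ge_diff[of x p] xlog_ge_diff[of "1 - x" "1 - p"] assms unfolding Ip_def by linarith

lemma Ip_one [simp]: "Ip p 1 = ln (1 / p)"
  by (simp add: Ip_def xlog_def)

lemma Ip_self: "0 < p \<Longrightarrow> p < 1 \<Longrightarrow> Ip p p = 0"
  by (simp add: Ip_def xlog_def)

lemma Phi_le_Ip_mat:
  assumes "0 < p" "p < 1" "Q \<in> Qmats n" "(1 + \<delta>) * p ^ card E \<le> hom_density V E n Q"
  shows "Phi V E n p \<delta> \<le> Ip_mat n p Q"
  unfolding Phi_def
proof (rule cInf_lower)
  show "bdd_below {Ip_mat n p Q |Q. Q \<in> Qmats n \<and> (1 + \<delta>) * p ^ card E \<le> hom_density V E n Q}"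
    using assms(1,2) by (intro bdd_belowI[of _ 0])
      (auto simp: Ip_mat_def Qmats_def intro!: sum_nonneg Ip_nonneg)
qed (use assms in blast)

definition planted_matrix :: "(nat \<times> nat) set \<Rightarrow> real \<Rightarrow> nat \<Rightarrow> nat \<Rightarrow> real" where
  "planted_matrix R q i j = (if i = j then 0 else if (i, j) \<in> R then 1 else q)"

lemma planted_matrix_in_Qmats: "0 \<le> q \<Longrightarrow> q \<le> 1 \<Longrightarrow> planted_matrix R q \<in> Qmats n"
  by (simp add: planted_matrix_def Qmats_def)

lemma planted_matrix_nonneg: "0 \<le> q \<Longrightarrow> 0 \<le> planted_matrix R q i j"
  by (simp add: planted_matrix_def)

lemma Ip_mat_planted_le:
  assumes "0 < q" "q < 1" "finite R"
  shows "Ip_mat n q (planted_matrix R q) \<le> ln (1 / q) * card R"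
proof -
  define P where "P = Sigma {..<n} (\<lambda>i. {..<n} - {i})"
  have "Ip_mat n q (planted_matrix R q) = (\<Sum>(i, j)\<in>P. Ip q (planted_matrix R q i j))"
    unfolding Ip_mat_def P_def by (subst sum.Sigma) auto
  also have "\<dots> = (\<Sum>ij\<in>P. if ij \<in> R then ln (1 / q) else 0)"
    using assms by (intro sum.cong) (auto simp: P_def planted_matrix_def Ip_self)
  also have "\<dots> = ln (1 / q) * card (P \<inter> R)"
    by (simp add: sum.If_cases P_def)
  also have "\<dots> \<le> ln (1 / q) * card R"
    using assms by (intro mult_left_mono) (simp_all add: card_mono)
  finally show ?thesis .
qed

lemma rate_le_planted:
  assumes "0 < q" "q < 1" "0 < n" "finite R"
    and "(1 + \<delta>) * q ^ card E \<le> hom_density V E n (planted_matrix R q)"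
  shows "rate V E \<delta> n q \<le> card R / (real n ^ 2 * q ^ maxdeg V E)"
proof -
  have "ln (1 / q) > 0" using assms by simp
  have "Phi V E n q \<delta> \<le> ln (1 / q) * card R"
    using Phi_le_Ip_mat[OF assms(1,2) planted_matrix_in_Qmats assms(5)] Ip_mat_planted_le[OF assms(1,2,4)]
      assms(1,2) by (meson order_trans less_imp_le)
  then have "rate V E \<delta> n q \<le> ln (1 / q) * card R / (real n ^ 2 * q ^ maxdeg V E * ln (1 / q))"
    unfolding rate_def using assms \<open>ln (1 / q) > 0\<close> by (intro divide_right_mono) simp_all
  then show ?thesis using \<open>ln (1 / q) > 0\<close> by simp
qed

section \<open>Edges at independent sets of the maximum-degree vertices\<close>

definition incident_edges :: "('v \<times> 'v) set \<Rightarrow> 'v set \<Rightarrow> ('v \<times> 'v) set" where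
  "incident_edges E A = {e\<in>E. fst e \<in> A \<or> snd e \<in> A}"

lemma digraph_finite_edges: "digraph V E \<Longrightarrow> finite E"
  unfolding digraph_def using finite_subset[of E "V \<times> V"] by blast

lemma digraph_edgeD: "digraph V E \<Longrightarrow> (u, w) \<in> E \<Longrightarrow> u \<in> V \<and> w \<in> V \<and> u \<noteq> w"
  unfolding digraph_def by blast

lemma card_out_edges:
  assumes "digraph V E" "finite A"
  shows "card {e\<in>E. fst e \<in> A} = (\<Sum>a\<in>A. outdeg E a)"
proof -
  have "{e\<in>E. fst e \<in> A} = Sigma A (\<lambda>a. {u. (a, u) \<in> E})" by auto
  moreover have "finite {u. (a, u) \<in> E}" for a
    using finite_imageI[OF digraph_finite_edges[OF assms(1)], of snd] by (rule rev_finite_subset) force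
  ultimately show ?thesis using assms(2) by (simp add: outdeg_def)
qed

lemma card_in_edges:
  assumes "digraph V E" "finite A"
  shows "card {e\<in>E. snd e \<in> A} = (\<Sum>a\<in>A. indeg E a)"
proof -
  have "{e\<in>E. snd e \<in> A} = prod.swap ` Sigma A (\<lambda>a. {u. (u, a) \<in> E})" by force
  moreover have "finite {u. (u, a) \<in> E}" for a
    using finite_imageI[OF digraph_finite_edges[OF assms(1)], of fst] by (rule rev_finite_subset) force
  ultimately show ?thesis using assms(2) by (simp add: card_image indeg_def)
qed

lemma card_incident_edges_le:
  assumes "digraph V E" "finite A"
  shows "card (incident_edges E A) \<le> (\<Sum>a\<in>A. deg E a)"
proof -
  have "incident_edges E A = {e\<in>E. fst e \<in> A} \<union> {e\<in>E. snd e \<in> A}"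
    by (auto simp: incident_edges_def)
  then have "card (incident_edges E A) \<le> card {e\<in>E. fst e \<in> A} + card {e\<in>E. snd e \<in> A}"
    by (simp add: card_Un_le)
  then show ?thesis using card_out_edges[OF assms] card_in_edges[OF assms]
    by (simp add: deg_def sum.distrib)
qed

lemma handshake:
  assumes "digraph V E" "regular V E d"
  shows "2 * card E = card V * d"
proof -
  have "finite V" using assms(1) by (simp add: digraph_def)
  have "{e\<in>E. fst e \<in> V} = E" "{e\<in>E. snd e \<in> V} = E"
    using assms(1) by (auto simp: digraph_def)
  then have out: "(\<Sum>v\<in>V. outdeg E v) = card E" and "in": "(\<Sum>v\<in>V. indeg E v) = card E"
    using card_out_edges[OF assms(1) \<open>finite V\<close>] card_in_edges[OF assms(1) \<open>finite V\<close>] by simp_all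
  have "card V * d = (\<Sum>v\<in>V. deg E v)" using assms(2) by (simp add: regular_def)
  also have "\<dots> = (\<Sum>v\<in>V. outdeg E v) + (\<Sum>v\<in>V. indeg E v)"
    by (simp add: deg_def sum.distrib add.commute)
  finally show ?thesis unfolding out "in" by simp
qed

lemma deg_le_maxdeg: "digraph V E \<Longrightarrow> v \<in> V \<Longrightarrow> deg E v \<le> maxdeg V E"
  unfolding maxdeg_def digraph_def by (intro Max_ge) auto

lemma maxdeg_pos:
  assumes "digraph V E" "E \<noteq> {}"
  shows "0 < maxdeg V E"
proof -
  obtain u w where "(u, w) \<in> E" using assms(2) by auto
  then have "card {e\<in>E. fst e \<in> {u}} > 0"
    using digraph_finite_edges[OF assms(1)] by (auto simp: card_gt_0_iff)
  then have "deg E u > 0" using card_out_edges[OF assms(1), of "{u}"] by (simp add: deg_def)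
  then show ?thesis
    using deg_le_maxdeg[OF assms(1)] digraph_edgeD[OF assms(1) \<open>(u, w) \<in> E\<close>] by fastforce
qed

lemma indep_sets_finite: "digraph V E \<Longrightarrow> finite (indep_sets V E)"
  unfolding indep_sets_def Vstar_def digraph_def by (rule finite_subset[of _ "Pow V"]) auto

lemma empty_in_indep_sets [simp]: "{} \<in> indep_sets V E"
  unfolding indep_sets_def by simp

lemma indep_setD:
  assumes "S \<in> indep_sets V E"
  shows "S \<subseteq> V" and "s \<in> S \<Longrightarrow> deg E s = maxdeg V E"
    and "u \<in> S \<Longrightarrow> w \<in> S \<Longrightarrow> (u, w) \<notin> E"
  using assms unfolding indep_sets_def Vstar_def by auto

lemma indep_set_finite: "digraph V E \<Longrightarrow> S \<in> indep_sets V E \<Longrightarrow> finite S"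
  using finite_subset[OF indep_setD(1)] unfolding digraph_def by blast

lemma indep_vertex_has_edge:
  assumes "digraph V E" "E \<noteq> {}" "S \<in> indep_sets V E" "s \<in> S"
  shows "(\<exists>u. (u, s) \<in> E) \<or> (\<exists>u. (s, u) \<in> E)"
proof (rule ccontr)
  assume "\<not> ?thesis"
  then have "deg E s = 0" by (simp add: deg_def indeg_def outdeg_def)
  then show False using indep_setD(2)[OF assms(3,4)] maxdeg_pos[OF assms(1,2)] by simp
qed

lemma card_incident_edges_indep:
  assumes "digraph V E" "S \<in> indep_sets V E"
  shows "card (incident_edges E S) = maxdeg V E * card S"
proof -
  have "finite S" using indep_set_finite[OF assms] .
  have split: "incident_edges E S = {e\<in>E. fst e \<in> S} \<union> {e\<in>E. snd e \<in> S}"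
    by (auto simp: incident_edges_def)
  have disjoint: "{e\<in>E. fst e \<in> S} \<inter> {e\<in>E. snd e \<in> S} = {}"
  proof (rule equals0I)
    fix e assume "e \<in> {e\<in>E. fst e \<in> S} \<inter> {e\<in>E. snd e \<in> S}"
    then show False using indep_setD(3)[OF assms(2), of "fst e" "snd e"] by simp
  qed
  have fin: "finite {e\<in>E. P e}" for P
    using digraph_finite_edges[OF assms(1)] by (rule finite_subset[rotated]) auto
  have "card (incident_edges E S) = card {e\<in>E. fst e \<in> S} + card {e\<in>E. snd e \<in> S}"
    unfolding split by (rule card_Un_disjoint[OF fin fin disjoint])
  also have "\<dots> = (\<Sum>s\<in>S. deg E s)"
    using card_out_edges[OF assms(1) \<open>finite S\<close>] card_in_edges[OF assms(1) \<open>finite S\<close>]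
    by (simp add: deg_def sum.distrib)
  also have "\<dots> = (\<Sum>s\<in>S. maxdeg V E)" using indep_setD(2)[OF assms(2)] by (rule sum.cong[OF refl])
  finally show ?thesis by simp
qed

text \<open>Every edge at an independent set S of \<open>H\<^sup>*\<close> has its other end in \<open>N\<^sup>+(S) \<union> N\<^sup>-(S)\<close>, where
  the degrees are at most \<open>\<Delta>\<close>, while the degrees on S are exactly \<open>\<Delta>\<close>.\<close>
lemma card_indep_le_card_Nout_Nin:
  assumes "digraph V E" "E \<noteq> {}" "S \<in> indep_sets V E"
  shows "card S \<le> card (Nout V E S) + card (Nin V E S)"
proof -
  let ?N = "Nout V E S \<union> Nin V E S"
  have "finite ?N" using assms(1) by (auto simp: digraph_def Nout_def Nin_def)
  have deg_bound: "deg E w \<le> maxdeg V E" if "w \<in> ?N" for w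
    using deg_le_maxdeg[OF assms(1)] that by (auto simp: Nout_def Nin_def)
  have "incident_edges E S \<subseteq> incident_edges E ?N"
    using indep_setD(3)[OF assms(3)] digraph_edgeD[OF assms(1)]
    by (auto simp: incident_edges_def Nout_def Nin_def)
  then have "card (incident_edges E S) \<le> card (incident_edges E ?N)"
    using digraph_finite_edges[OF assms(1)] by (intro card_mono) (simp_all add: incident_edges_def)
  then have "maxdeg V E * card S \<le> card (incident_edges E ?N)"
    using card_incident_edges_indep[OF assms(1,3)] by simp
  also have "\<dots> \<le> (\<Sum>w\<in>?N. deg E w)" by (rule card_incident_edges_le[OF assms(1) \<open>finite ?N\<close>])
  also have "\<dots> \<le> (\<Sum>w\<in>?N. maxdeg V E)" by (rule sum_mono[OF deg_bound])
  also have "\<dots> \<le> (card (Nout V E S) + card (Nin V E S)) * maxdeg V E"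
    by (simp add: card_Un_le)
  finally have "card S * maxdeg V E \<le> (card (Nout V E S) + card (Nin V E S)) * maxdeg V E"
    by (simp add: mult.commute)
  then show ?thesis using maxdeg_pos[OF assms(1,2)] by simp
qed

section \<open>The polynomial \<open>f\<^sub>H\<close>\<close>

definition fH_term :: "'v set \<Rightarrow> ('v \<times> 'v) set \<Rightarrow> 'v set \<Rightarrow> real \<Rightarrow> real \<Rightarrow> real \<Rightarrow> real \<Rightarrow> real" where
  "fH_term V E S x1 x2 y1 y2 = x1 ^ vplus E S * x2 ^ vminus E S * (min x1 x2) ^ vpm E S *
      y1 ^ card (Nout V E S) * y2 ^ card (Nin V E S)"

lemma fH_eq_sum_term: "fH V E x1 x2 y1 y2 = (\<Sum>S\<in>indep_sets V E. fH_term V E S x1 x2 y1 y2)"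
  unfolding fH_def fH_term_def ..

lemma fH_term_nonneg: "0 \<le> x1 \<Longrightarrow> 0 \<le> x2 \<Longrightarrow> 0 \<le> y1 \<Longrightarrow> 0 \<le> y2 \<Longrightarrow> 0 \<le> fH_term V E S x1 x2 y1 y2"
  unfolding fH_term_def by simp

lemma fH_term_empty [simp]: "fH_term V E {} x1 x2 y1 y2 = 1"
  unfolding fH_term_def vplus_def vminus_def vpm_def Nout_def Nin_def by simp

text \<open>The vertices are sorted by their role with respect to S: vertices of S with no in-neighbour,
  with no out-neighbour, or with both; and vertices outside S according to whether they lie in
  \<open>N\<^sup>+(S)\<close>, \<open>N\<^sup>-(S)\<close>, both or neither.  Then the term of S in \<open>f\<^sub>H\<close> is a product of one weight
  per vertex.\<close>
datatype vertex_class = Source | Sink | Transit | Out_nbr | In_nbr | Both_nbr | Far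

definition classify :: "'v set \<Rightarrow> ('v \<times> 'v) set \<Rightarrow> 'v set \<Rightarrow> 'v \<Rightarrow> vertex_class" where
  "classify V E S w =
    (if w \<in> S then
       (if \<not> (\<exists>u. (u, w) \<in> E) then Source else if \<not> (\<exists>u. (w, u) \<in> E) then Sink else Transit)
     else if w \<in> Nout V E S then (if w \<in> Nin V E S then Both_nbr else Out_nbr)
     else if w \<in> Nin V E S then In_nbr else Far)"

fun in_hub :: "vertex_class \<Rightarrow> bool" where
  "in_hub Source = True"
| "in_hub Sink = True"
| "in_hub Transit = True"
| "in_hub _ = False"

lemma in_hub_classify [simp]: "in_hub (classify V E S w) \<longleftrightarrow> w \<in> S"
  by (simp add: classify_def)

fun class_weight :: "real \<Rightarrow> real \<Rightarrow> real \<Rightarrow> real \<Rightarrow> vertex_class \<Rightarrow> real" where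
  "class_weight x1 x2 y1 y2 Source = x1"
| "class_weight x1 x2 y1 y2 Sink = x2"
| "class_weight x1 x2 y1 y2 Transit = min x1 x2"
| "class_weight x1 x2 y1 y2 Out_nbr = y1"
| "class_weight x1 x2 y1 y2 In_nbr = y2"
| "class_weight x1 x2 y1 y2 Both_nbr = y1 * y2"
| "class_weight x1 x2 y1 y2 Far = 1"

lemma prod_class_weight:
  assumes H: "digraph V E" and "E \<noteq> {}" and S: "S \<in> indep_sets V E"
  shows "(\<Prod>w\<in>V. class_weight x1 x2 y1 y2 (classify V E S w)) = fH_term V E S x1 x2 y1 y2"
proof -
  let ?cw = "\<lambda>w. class_weight x1 x2 y1 y2 (classify V E S w)"
  let ?no_in = "{w. \<not> (\<exists>u. (u, w) \<in> E)}" and ?no_out = "{w. \<not> (\<exists>u. (w, u) \<in> E)}"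
  have "finite V" using H by (simp add: digraph_def)
  have "S \<subseteq> V" using indep_setD(1)[OF S] .
  have "finite S" using indep_set_finite[OF H S] .
  have "prod ?cw S = (\<Prod>w\<in>S. if w \<in> ?no_in then x1 else if w \<in> ?no_out then x2 else min x1 x2)"
    by (intro prod.cong) (auto simp: classify_def)
  also have "\<dots> = x1 ^ vplus E S * x2 ^ vminus E S * min x1 x2 ^ vpm E S"
  proof -
    have "S \<inter> - ?no_in \<inter> ?no_out = {v\<in>S. \<not> (\<exists>u. (v, u) \<in> E)}"
      using indep_vertex_has_edge[OF H \<open>E \<noteq> {}\<close> S] by auto
    moreover have "S \<inter> - ?no_in \<inter> - ?no_out = {v\<in>S. (\<exists>u. (u, v) \<in> E) \<and> (\<exists>u. (v, u) \<in> E)}"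
      by auto
    moreover have "S \<inter> ?no_in = {v\<in>S. \<not> (\<exists>u. (u, v) \<in> E)}" by auto
    ultimately show ?thesis using \<open>finite S\<close>
      by (simp add: prod.If_cases vplus_def vminus_def vpm_def Int_assoc)
  qed
  finally have on_S: "prod ?cw S = x1 ^ vplus E S * x2 ^ vminus E S * min x1 x2 ^ vpm E S" .
  have "prod ?cw (V - S) =
      (\<Prod>w\<in>V - S. (if w \<in> Nout V E S then y1 else 1) * (if w \<in> Nin V E S then y2 else 1))"
    by (intro prod.cong) (auto simp: classify_def)
  also have "\<dots> = y1 ^ card (Nout V E S) * y2 ^ card (Nin V E S)"
  proof -
    have "(V - S) \<inter> Nout V E S = Nout V E S" "(V - S) \<inter> Nin V E S = Nin V E S"
      by (auto simp: Nout_def Nin_def)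
    then show ?thesis using \<open>finite V\<close> by (simp add: prod.distrib prod.If_cases)
  qed
  finally have off_S: "prod ?cw (V - S) = y1 ^ card (Nout V E S) * y2 ^ card (Nin V E S)" .
  have "prod ?cw V = prod ?cw (V - S) * prod ?cw S"
    by (rule prod.subset_diff[OF \<open>S \<subseteq> V\<close> \<open>finite V\<close>])
  then show ?thesis using on_S off_S by (simp add: fH_term_def mult_ac)
qed

lemma fH_term_scale:
  assumes "digraph V E" "E \<noteq> {}" "S \<in> indep_sets V E" "0 \<le> l"
  shows "fH_term V E S (l * x1) (l * x2) y1 y2 = l ^ card S * fH_term V E S x1 x2 y1 y2"
proof -
  have "class_weight (l * x1) (l * x2) y1 y2 k = (if in_hub k then l else 1) * class_weight x1 x2 y1 y2 k"
    for k using assms(4) by (cases k) (simp_all add: min_mult_distrib_left)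
  moreover have "V \<inter> S = S" using indep_setD(1)[OF assms(3)] by auto
  moreover have "finite V" using assms(1) by (simp add: digraph_def)
  ultimately show ?thesis
    by (simp add: prod_class_weight[OF assms(1-3), symmetric] prod.distrib prod.If_cases)
qed

lemma fH_term_rescale_y:
  assumes "digraph V E" "E \<noteq> {}" "S \<in> indep_sets V E" "0 < s" "s \<le> 1"
    and "0 \<le> x1" "0 \<le> x2" "0 \<le> y1" "0 \<le> y2"
  shows "fH_term V E S x1 x2 y1 y2 \<le> fH_term V E S (s * x1) (s * x2) (y1 / s) (y2 / s)"
proof -
  let ?A = "card (Nout V E S)" and ?B = "card (Nin V E S)"
  have "s ^ (?A + ?B) \<le> s ^ card S"
    using card_indep_le_card_Nout_Nin[OF assms(1-3)] assms(4,5) by (intro power_decreasing) auto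
  then have "1 \<le> s ^ card S / s ^ (?A + ?B)" using assms(4) by simp
  then have "fH_term V E S x1 x2 y1 y2 \<le> s ^ card S / s ^ (?A + ?B) * fH_term V E S x1 x2 y1 y2"
    using mult_right_mono[OF _ fH_term_nonneg[OF assms(6-9)]] by fastforce
  also have "\<dots> = s ^ card S * fH_term V E S x1 x2 (y1 / s) (y2 / s)"
    by (simp add: fH_term_def power_divide power_add)
  also have "\<dots> = fH_term V E S (s * x1) (s * x2) (y1 / s) (y2 / s)"
    using fH_term_scale[OF assms(1-3)] assms(4) by simp
  finally show ?thesis .
qed

lemma fH_term_zero_y:
  assumes "digraph V E" "E \<noteq> {}" "S \<in> indep_sets V E" "S \<noteq> {}"
  shows "fH_term V E S x1 x2 0 0 = 0"
proof -
  have "card S \<noteq> 0" using indep_set_finite[OF assms(1,3)] assms(4) by simp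
  then have "card (Nout V E S) + card (Nin V E S) \<noteq> 0"
    using card_indep_le_card_Nout_Nin[OF assms(1-3)] by linarith
  then show ?thesis by (auto simp: fH_term_def)
qed

lemma fH_scale:
  assumes "digraph V E" "E \<noteq> {}" "0 \<le> l"
  shows "fH V E (l * x1) (l * x2) y1 y2 = (\<Sum>S\<in>indep_sets V E. l ^ card S * fH_term V E S x1 x2 y1 y2)"
  unfolding fH_eq_sum_term using fH_term_scale[OF assms(1,2) _ assms(3)] by simp

lemma sum_indep_sets_split:
  "digraph V E \<Longrightarrow> (\<Sum>S\<in>indep_sets V E. f S) = f {} + (\<Sum>S\<in>indep_sets V E - {{}}. f S)"
  using sum.remove[OF indep_sets_finite empty_in_indep_sets] by simp

lemma fH_zero_x:
  assumes "digraph V E" "E \<noteq> {}"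
  shows "fH V E 0 0 y1 y2 = 1"
proof -
  have "fH V E 0 0 y1 y2 = (\<Sum>S\<in>indep_sets V E. 0 ^ card S * fH_term V E S 1 1 y1 y2)"
    using fH_scale[OF assms, of 0 1 1] by simp
  also have "\<dots> = 1 + (\<Sum>S\<in>indep_sets V E - {{}}. 0 ^ card S * fH_term V E S 1 1 y1 y2)"
    by (simp add: sum_indep_sets_split[OF assms(1)])
  also have "(\<Sum>S\<in>indep_sets V E - {{}}. 0 ^ card S * fH_term V E S 1 1 y1 y2) = (0::real)"
    using indep_set_finite[OF assms(1)] by (intro sum.neutral) auto
  finally show ?thesis by simp
qed

lemma fH_zero_y:
  assumes "digraph V E" "E \<noteq> {}"
  shows "fH V E x1 x2 0 0 = 1"
  unfolding fH_eq_sum_term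
  by (subst sum_indep_sets_split[OF assms(1)]) (simp add: fH_term_zero_y[OF assms])

lemma fH_superlinear:
  assumes "digraph V E" "E \<noteq> {}" "1 \<le> l" "0 \<le> x1" "0 \<le> x2" "0 \<le> y1" "0 \<le> y2"
  shows "l * (fH V E x1 x2 y1 y2 - 1) \<le> fH V E (l * x1) (l * x2) y1 y2 - 1"
proof -
  have "l * fH_term V E S x1 x2 y1 y2 \<le> l ^ card S * fH_term V E S x1 x2 y1 y2"
    if "S \<in> indep_sets V E - {{}}" for S
  proof -
    have "card S \<ge> 1" using that indep_set_finite[OF assms(1)] by (auto simp: Suc_le_eq card_gt_0_iff)
    then have "l \<le> l ^ card S" using assms(3) by (metis power_one_right power_increasing)
    then show ?thesis using fH_term_nonneg assms(4-7) by (intro mult_right_mono) auto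
  qed
  then have "l * (\<Sum>S\<in>indep_sets V E - {{}}. fH_term V E S x1 x2 y1 y2)
      \<le> (\<Sum>S\<in>indep_sets V E - {{}}. l ^ card S * fH_term V E S x1 x2 y1 y2)"
    unfolding sum_distrib_left by (rule sum_mono)
  moreover have "fH V E (l * x1) (l * x2) y1 y2
      = 1 + (\<Sum>S\<in>indep_sets V E - {{}}. l ^ card S * fH_term V E S x1 x2 y1 y2)"
    using assms(3) by (simp add: fH_scale[OF assms(1,2)] sum_indep_sets_split[OF assms(1)])
  moreover have "fH V E x1 x2 y1 y2 = 1 + (\<Sum>S\<in>indep_sets V E - {{}}. fH_term V E S x1 x2 y1 y2)"
    by (simp add: fH_eq_sum_term sum_indep_sets_split[OF assms(1)])
  ultimately show ?thesis by (simp add: algebra_simps)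
qed

lemma fH_le_rescale_y:
  assumes "digraph V E" "E \<noteq> {}" "0 < s" "s \<le> 1" "0 \<le> x1" "0 \<le> x2" "0 \<le> y1" "0 \<le> y2"
  shows "fH V E x1 x2 y1 y2 \<le> fH V E (s * x1) (s * x2) (y1 / s) (y2 / s)"
  unfolding fH_eq_sum_term using assms by (intro sum_mono fH_term_rescale_y) auto

lemma exists_fH_scale_eq:
  assumes "digraph V E" "E \<noteq> {}" "0 \<le> x1" "0 \<le> x2" "0 < \<delta>" "1 + \<delta> \<le> fH V E x1 x2 y1 y2"
  obtains l where "0 \<le> l" "l \<le> 1" "fH V E (l * x1) (l * x2) y1 y2 = 1 + \<delta>"
proof -
  let ?g = "\<lambda>l. fH V E (l * x1) (l * x2) y1 y2"
  have "continuous_on {0..1} (\<lambda>l. \<Sum>S\<in>indep_sets V E. l ^ card S * fH_term V E S x1 x2 y1 y2)"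
    by (intro continuous_intros)
  then have "continuous_on {0..1} ?g"
    by (rule continuous_on_cong[THEN iffD1, rotated 2]) (auto simp: fH_scale[OF assms(1,2)])
  moreover have "?g 0 \<le> 1 + \<delta>" "1 + \<delta> \<le> ?g 1"
    using fH_zero_x[OF assms(1,2)] assms(5,6) by simp_all
  ultimately show ?thesis using IVT'[of ?g 0 "1 + \<delta>" 1] that by auto
qed

lemma exists_fH_eq_at_one:
  assumes "digraph V E" "E \<noteq> {}" "0 < \<delta>"
  obtains x1 x2 where "0 \<le> x1" "0 \<le> x2" "fH V E x1 x2 1 1 = 1 + \<delta>"
proof -
  have "V \<noteq> {}" "finite V" using assms(1,2) by (auto simp: digraph_def)
  then have "maxdeg V E \<in> deg E ` V" unfolding maxdeg_def by (intro Max_in) auto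
  then obtain v where "v \<in> V" "deg E v = maxdeg V E" by auto
  then have v: "{v} \<in> indep_sets V E"
    using digraph_edgeD[OF assms(1)] by (auto simp: indep_sets_def Vstar_def)
  have "fH_term V E {v} \<delta> \<delta> 1 1 = \<delta>"
    using fH_term_scale[OF assms(1,2) v, of \<delta> 1 1 1 1] assms(3) by (simp add: fH_term_def)
  then have "1 + \<delta> = (\<Sum>S\<in>{{}, {v}}. fH_term V E S \<delta> \<delta> 1 1)" by simp
  also have "\<dots> \<le> fH V E \<delta> \<delta> 1 1"
    unfolding fH_eq_sum_term using indep_sets_finite[OF assms(1)] v assms(3)
    by (intro sum_mono2) (auto intro: fH_term_nonneg)
  finally have "1 + \<delta> \<le> fH V E \<delta> \<delta> 1 1" .
  moreover have "0 \<le> \<delta>" using assms(3) by simp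
  ultimately obtain l where "0 \<le> l" "l \<le> 1" "fH V E (l * \<delta>) (l * \<delta>) 1 1 = 1 + \<delta>"
    using exists_fH_scale_eq[OF assms(1,2) _ _ assms(3)] by blast
  then show ?thesis using that[of "l * \<delta>" "l * \<delta>"] assms(3) by simp
qed

lemma exists_feasible_max_y_eq_one:
  assumes "digraph V E" "E \<noteq> {}" "0 < \<delta>"
    and "0 \<le> x1" "0 \<le> x2" "0 \<le> y1" "y1 \<le> 1" "0 \<le> y2" "y2 \<le> 1" "fH V E x1 x2 y1 y2 = 1 + \<delta>"
  obtains x1' x2' y1' y2' where "0 \<le> x1'" "0 \<le> x2'" "0 \<le> y1'" "y1' \<le> 1" "0 \<le> y2'" "y2' \<le> 1"
    "max y1' y2' = 1" "fH V E x1' x2' y1' y2' = 1 + \<delta>" "x1' * y1' + x2' * y2' \<le> x1 * y1 + x2 * y2"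
proof -
  define s where "s = max y1 y2"
  have "s \<noteq> 0"
  proof
    assume "s = 0"
    then have "y1 = 0" "y2 = 0" using assms(6,8) by (auto simp: s_def)
    then show False using fH_zero_y[OF assms(1,2)] assms(3,10) by simp
  qed
  then have s: "0 < s" "s \<le> 1" using assms(6-9) by (auto simp: s_def)
  then have "1 + \<delta> \<le> fH V E (s * x1) (s * x2) (y1 / s) (y2 / s)"
    using fH_le_rescale_y[OF assms(1,2) s assms(4,5,6,8)] assms(10) by simp
  then obtain l where l: "0 \<le> l" "l \<le> 1" "fH V E (l * (s * x1)) (l * (s * x2)) (y1 / s) (y2 / s) = 1 + \<delta>"
    using exists_fH_scale_eq[OF assms(1,2), of "s * x1" "s * x2" \<delta>] assms(3-5) s by auto
  have "l * (s * x1) * (y1 / s) + l * (s * x2) * (y2 / s) = l * (x1 * y1 + x2 * y2)"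
    using s by (simp add: field_simps)
  also have "\<dots> \<le> x1 * y1 + x2 * y2"
    using l assms(4-9) by (intro mult_left_le_one_le) auto
  finally show ?thesis
    using that[of "l * (s * x1)" "l * (s * x2)" "y1 / s" "y2 / s"] l s assms(4-9)
    by (auto simp: s_def max_def)
qed

lemma FH_edge_eq_FH:
  assumes "digraph V E" "E \<noteq> {}" "0 < \<delta>"
  shows "FH_edge V E \<delta> = FH V E \<delta>"
proof -
  let ?T = "{x1 * y1 + x2 * y2 | x1 x2 y1 y2.
      x1 \<ge> 0 \<and> x2 \<ge> 0 \<and> 0 \<le> y1 \<and> y1 \<le> 1 \<and> 0 \<le> y2 \<and> y2 \<le> 1 \<and>
      fH V E x1 x2 y1 y2 = 1 + \<delta>}"
  let ?T' = "{x1 * y1 + x2 * y2 | x1 x2 y1 y2.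
      x1 \<ge> 0 \<and> x2 \<ge> 0 \<and> 0 \<le> y1 \<and> y1 \<le> 1 \<and> 0 \<le> y2 \<and> y2 \<le> 1 \<and>
      max y1 y2 = 1 \<and> fH V E x1 x2 y1 y2 = 1 + \<delta>}"
  obtain a1 a2 where "0 \<le> a1" "0 \<le> a2" "fH V E a1 a2 1 1 = 1 + \<delta>"
    using exists_fH_eq_at_one[OF assms] .
  then have "a1 * 1 + a2 * 1 \<in> ?T'" by fastforce
  then have "?T' \<noteq> {}" by blast
  have bdd: "bdd_below ?T" "bdd_below ?T'"
    by (auto intro!: bdd_belowI[of _ 0])
  have "Inf ?T \<le> Inf ?T'" by (rule cInf_superset_mono[OF \<open>?T' \<noteq> {}\<close> bdd(1)]) blast
  moreover have "Inf ?T' \<le> Inf ?T"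
  proof (rule cInf_mono[OF _ bdd(2)])
    show "?T \<noteq> {}" using \<open>?T' \<noteq> {}\<close> by blast
    fix b assume "b \<in> ?T"
    then obtain x1 x2 y1 y2 where b: "b = x1 * y1 + x2 * y2" and feasible: "0 \<le> x1" "0 \<le> x2"
      "0 \<le> y1" "y1 \<le> 1" "0 \<le> y2" "y2 \<le> 1" "fH V E x1 x2 y1 y2 = 1 + \<delta>" by blast
    obtain x1' x2' y1' y2' where "0 \<le> x1'" "0 \<le> x2'" "0 \<le> y1'" "y1' \<le> 1" "0 \<le> y2'" "y2' \<le> 1"
      "max y1' y2' = 1" "fH V E x1' x2' y1' y2' = 1 + \<delta>" and le: "x1' * y1' + x2' * y2' \<le> b"
      using exists_feasible_max_y_eq_one[OF assms feasible] b by blast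
    then have "x1' * y1' + x2' * y2' \<in> ?T'" by blast
    with le show "\<exists>a\<in>?T'. a \<le> b" by blast
  qed
  ultimately show ?thesis unfolding FH_def FH_edge_def by simp
qed

section \<open>Counting homomorphisms into planted matrices\<close>

lemma card_PiE_collision_le:
  assumes "finite V" "u \<in> V" "v \<in> V" "u \<noteq> v" "\<And>w. w \<in> V \<Longrightarrow> finite (C w)"
  shows "card {\<phi>\<in>PiE V C. \<phi> u = \<phi> v} * card (C v) \<le> card (PiE V C)"
proof -
  let ?B = "{\<phi>\<in>PiE V C. \<phi> u = \<phi> v}"
  have "inj_on (\<lambda>(\<phi>, c). \<phi>(v := c)) (?B \<times> C v)"
  proof (rule inj_onI, clarify)
    fix \<phi> c \<psi> d
    assume "\<phi> u = \<phi> v" "\<psi> u = \<psi> v" and eq: "\<phi>(v := c) = \<psi>(v := d)"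
    have "\<phi> u = \<psi> u" using fun_cong[OF eq, of u] assms(4) by simp
    then have "\<phi> v = \<psi> v" using \<open>\<phi> u = \<phi> v\<close> \<open>\<psi> u = \<psi> v\<close> by simp
    then show "\<phi> = \<psi> \<and> c = d" using fun_cong[OF eq] by (metis fun_upd_apply ext)
  qed
  moreover have "(\<lambda>(\<phi>, c). \<phi>(v := c)) ` (?B \<times> C v) \<subseteq> PiE V C"
    using assms(3) by (auto simp: PiE_def Pi_def extensional_def)
  moreover have "finite (PiE V C)" using assms(1,5) by (intro finite_PiE) auto
  ultimately have "card (?B \<times> C v) \<le> card (PiE V C)" by (rule card_inj_on_le)
  then show ?thesis by (simp add: card_cartesian_product)
qed

text \<open>Union bound over the edges of F: a map collapsing the edge e is determined by its values
  away from the head of e, so at most a fraction \<open>1 / |C (snd e)|\<close> of all maps collapse e.\<close>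
lemma card_PiE_no_collision_ge:
  assumes "finite V" "finite F" "\<And>e. e \<in> F \<Longrightarrow> fst e \<in> V \<and> snd e \<in> V \<and> fst e \<noteq> snd e"
    and "\<And>w. w \<in> V \<Longrightarrow> finite (C w)"
  shows "(\<Prod>w\<in>V. real (card (C w))) * (1 - (\<Sum>e\<in>F. 1 / real (card (C (snd e)))))
     \<le> card {\<phi>\<in>PiE V C. \<forall>e\<in>F. \<phi> (fst e) \<noteq> \<phi> (snd e)}"
proof -
  let ?G = "{\<phi>\<in>PiE V C. \<forall>e\<in>F. \<phi> (fst e) \<noteq> \<phi> (snd e)}"
  let ?bad = "\<lambda>e. {\<phi>\<in>PiE V C. \<phi> (fst e) = \<phi> (snd e)}"
  have "finite (PiE V C)" using assms(1,4) by (intro finite_PiE) auto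
  have "card (PiE V C) \<le> card (?G \<union> (\<Union>e\<in>F. ?bad e))"
    by (rule card_mono) (auto intro: finite_subset[OF _ \<open>finite (PiE V C)\<close>])
  also have "\<dots> \<le> card ?G + card (\<Union>e\<in>F. ?bad e)" by (rule card_Un_le)
  also have "\<dots> \<le> card ?G + (\<Sum>e\<in>F. card (?bad e))" using card_UN_le[OF assms(2)] by simp
  finally have "card (PiE V C) \<le> card ?G + (\<Sum>e\<in>F. card (?bad e))" .
  moreover have "real (card (?bad e)) \<le> card (PiE V C) / card (C (snd e))" if "e \<in> F" for e
  proof (cases "C (snd e) = {}")
    case True
    then have "PiE V C = {}" using assms(3)[OF that] by (auto simp: PiE_eq_empty_iff)
    then show ?thesis by simp
  next
    case False
    then have "card (C (snd e)) > 0" using assms(3,4) that by (simp add: card_gt_0_iff)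
    then show ?thesis
      using card_PiE_collision_le[OF assms(1), of "fst e" "snd e" C] assms(3,4) that
      by (simp add: pos_le_divide_eq flip: of_nat_mult)
  qed
  then have "(\<Sum>e\<in>F. real (card (?bad e))) \<le> (\<Sum>e\<in>F. card (PiE V C) / card (C (snd e)))"
    by (rule sum_mono)
  moreover have "real (card (PiE V C)) = (\<Prod>w\<in>V. real (card (C w)))"
    using card_PiE[OF assms(1), of C] by simp
  ultimately show ?thesis
    by (simp add: right_diff_distrib sum_distrib_left flip: of_nat_sum)
qed

lemma hom_sum_ge_blocks:
  fixes C :: "'k \<Rightarrow> 'v \<Rightarrow> nat set" and L :: "'k \<Rightarrow> real" and F :: "'k \<Rightarrow> ('v \<times> 'v) set"
  assumes H: "digraph V E" and "finite K"
    and Q_nonneg: "\<And>i j. i < n \<Longrightarrow> j < n \<Longrightarrow> 0 \<le> Q i j"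
    and C_sub: "\<And>k w. k \<in> K \<Longrightarrow> w \<in> V \<Longrightarrow> C k w \<subseteq> {..<n}"
    and separated: "\<And>k k'. k \<in> K \<Longrightarrow> k' \<in> K \<Longrightarrow> k \<noteq> k' \<Longrightarrow> \<exists>w\<in>V. C k w \<inter> C k' w = {}"
    and L_le: "\<And>k \<phi>. k \<in> K \<Longrightarrow> \<phi> \<in> PiE V (C k) \<Longrightarrow> \<forall>e\<in>E - F k. \<phi> (fst e) \<noteq> \<phi> (snd e) \<Longrightarrow>
          L k \<le> (\<Prod>e\<in>E. Q (\<phi> (fst e)) (\<phi> (snd e)))"
    and L_nonneg: "\<And>k. k \<in> K \<Longrightarrow> 0 \<le> L k"
  shows "(\<Sum>k\<in>K. L k * ((\<Prod>w\<in>V. real (card (C k w))) *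
            (1 - (\<Sum>e\<in>E - F k. 1 / real (card (C k (snd e)))))))
     \<le> (\<Sum>\<phi>\<in>PiE V (\<lambda>_. {..<n}). \<Prod>e\<in>E. Q (\<phi> (fst e)) (\<phi> (snd e)))"
proof -
  define G where "G k = {\<phi>\<in>PiE V (C k). \<forall>e\<in>E - F k. \<phi> (fst e) \<noteq> \<phi> (snd e)}" for k
  define f where "f \<phi> = (\<Prod>e\<in>E. Q (\<phi> (fst e)) (\<phi> (snd e)))" for \<phi> :: "'v \<Rightarrow> nat"
  have "finite V" using H by (simp add: digraph_def)
  have edge: "fst e \<in> V \<and> snd e \<in> V \<and> fst e \<noteq> snd e" if "e \<in> E" for e
    using digraph_edgeD[OF H, of "fst e" "snd e"] that by simp
  have C_fin: "finite (C k w)" if "k \<in> K" "w \<in> V" for k w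
    using C_sub[OF that] finite_subset by blast
  have G_sub: "G k \<subseteq> PiE V (\<lambda>_. {..<n})" if "k \<in> K" for k
    using C_sub[OF that] unfolding G_def by (auto simp: PiE_def Pi_def)
  have "finite (PiE V (\<lambda>_. {..<n}))" using \<open>finite V\<close> by (intro finite_PiE) auto
  then have G_fin: "finite (G k)" if "k \<in> K" for k using G_sub[OF that] by (rule finite_subset[rotated])
  have block: "L k * ((\<Prod>w\<in>V. real (card (C k w))) * (1 - (\<Sum>e\<in>E - F k. 1 / real (card (C k (snd e))))))
      \<le> sum f (G k)" if k: "k \<in> K" for k
  proof -
    have "L k * ((\<Prod>w\<in>V. real (card (C k w))) * (1 - (\<Sum>e\<in>E - F k. 1 / real (card (C k (snd e))))))
        \<le> L k * card (G k)"
      unfolding G_def using \<open>finite V\<close> digraph_finite_edges[OF H] edge C_fin[OF k] L_nonneg[OF k]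
      by (intro mult_left_mono card_PiE_no_collision_ge) auto
    also have "\<dots> \<le> sum f (G k)"
      using sum_mono[of "G k" "\<lambda>_. L k" f] L_le[OF k] by (simp add: G_def f_def mult.commute)
    finally show ?thesis .
  qed
  have "disjoint_family_on G K"
    unfolding disjoint_family_on_def
  proof (intro ballI impI)
    fix k k' assume "k \<in> K" "k' \<in> K" "k \<noteq> k'"
    then obtain w where "w \<in> V" "C k w \<inter> C k' w = {}" using separated by blast
    then show "G k \<inter> G k' = {}" unfolding G_def by (auto simp: PiE_def Pi_def)
  qed
  have "(\<Sum>k\<in>K. L k * ((\<Prod>w\<in>V. real (card (C k w))) *
            (1 - (\<Sum>e\<in>E - F k. 1 / real (card (C k (snd e)))))))
      \<le> (\<Sum>k\<in>K. sum f (G k))" by (rule sum_mono) (rule block)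
  also have "\<dots> = sum f (\<Union>(G ` K))"
    using \<open>finite K\<close> \<open>disjoint_family_on G K\<close> G_fin by (simp add: sum.UNION_disjoint_family)
  also have "\<dots> \<le> sum f (PiE V (\<lambda>_. {..<n}))"
  proof (rule sum_mono2[OF \<open>finite (PiE V (\<lambda>_. {..<n}))\<close>])
    show "\<Union>(G ` K) \<subseteq> PiE V (\<lambda>_. {..<n})" using G_sub by blast
    show "0 \<le> f \<phi>" if "\<phi> \<in> PiE V (\<lambda>_. {..<n}) - \<Union>(G ` K)" for \<phi>
      using that edge Q_nonneg unfolding f_def by (intro prod_nonneg) (auto simp: PiE_def Pi_def)
  qed
  finally show ?thesis unfolding f_def .
qed

lemma clique_hom_sum_ge:
  fixes V :: "'v set" and s n :: nat
  assumes H: "digraph V E" and "V \<noteq> {}" and "0 \<le> q" "q \<le> 1" and "s \<le> n"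
  shows "q ^ card E * (real (n - s) ^ card V * (1 - card E / real (n - s)))
          + real s ^ card V * (1 - card E / real s)
      \<le> (\<Sum>\<phi>\<in>PiE V (\<lambda>_. {..<n}). \<Prod>e\<in>E.
            planted_matrix ({..<s} \<times> {..<s}) q (\<phi> (fst e)) (\<phi> (snd e)))"
proof -
  let ?Q = "planted_matrix ({..<s} \<times> {..<s}) q"
  define C where "C b w = (if b then {..<s} else {s..<n})" for b :: bool and w :: 'v
  define L where "L b = (if b then 1 else q ^ card E)" for b :: bool
  have edge: "fst e \<in> V \<and> snd e \<in> V" if "e \<in> E" for e
    using digraph_edgeD[OF H, of "fst e" "snd e"] that by simp
  have "(\<Sum>b\<in>UNIV. L b * ((\<Prod>w\<in>V. real (card (C b w))) * (1 - (\<Sum>e\<in>E - {}. 1 / real (card (C b (snd e)))))))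
     \<le> (\<Sum>\<phi>\<in>PiE V (\<lambda>_. {..<n}). \<Prod>e\<in>E. ?Q (\<phi> (fst e)) (\<phi> (snd e)))"
  proof (rule hom_sum_ge_blocks[OF H, where F = "\<lambda>_. {}"])
    show "C b w \<subseteq> {..<n}" for b w using assms(5) by (auto simp: C_def)
    show "\<exists>w\<in>V. C b w \<inter> C b' w = {}" if "b \<noteq> b'" for b b'
      using that \<open>V \<noteq> {}\<close> by (auto simp: C_def)
    fix b \<phi> assume \<phi>: "\<phi> \<in> PiE V (C b)" and distinct: "\<forall>e\<in>E - {}. \<phi> (fst e) \<noteq> \<phi> (snd e)"
    have "?Q (\<phi> (fst e)) (\<phi> (snd e)) = (if b then 1 else q)" if "e \<in> E" for e
      using PiE_mem[OF \<phi> edge[OF that, THEN conjunct1]] PiE_mem[OF \<phi> edge[OF that, THEN conjunct2]]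
        distinct that by (auto simp: C_def planted_matrix_def)
    then show "L b \<le> (\<Prod>e\<in>E. ?Q (\<phi> (fst e)) (\<phi> (snd e)))" by (simp add: L_def)
  qed (use assms(3) in \<open>auto simp: planted_matrix_def L_def\<close>)
  then show ?thesis by (simp add: C_def L_def UNIV_bool add.commute)
qed

definition hub_part :: "nat \<Rightarrow> (vertex_class \<Rightarrow> nat) \<Rightarrow> vertex_class \<Rightarrow> nat set" where
  "hub_part n sz k = (if in_hub k then {..<sz k} else {n - sz k..<n})"

definition hub_rectangles :: "nat \<Rightarrow> (vertex_class \<Rightarrow> nat) \<Rightarrow> (nat \<times> nat) set" where
  "hub_rectangles n sz = {..<sz Source} \<times> {n - sz Out_nbr..<n} \<union> {n - sz In_nbr..<n} \<times> {..<sz Sink}"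

lemma card_hub_rectangles_le:
  "card (hub_rectangles n sz) \<le> sz Source * sz Out_nbr + sz In_nbr * sz Sink"
proof -
  have "card (hub_rectangles n sz) \<le> card ({..<sz Source} \<times> {n - sz Out_nbr..<n})
      + card ({n - sz In_nbr..<n} \<times> {..<sz Sink})"
    unfolding hub_rectangles_def by (rule card_Un_le)
  also have "\<dots> \<le> sz Source * sz Out_nbr + sz In_nbr * sz Sink"
    unfolding card_cartesian_product by (intro add_mono mult_mono) simp_all
  finally show ?thesis .
qed

lemma card_hub_part: "sz k \<le> n \<Longrightarrow> card (hub_part n sz k) = sz k"
  by (simp add: hub_part_def)

lemma classify_out_edge:
  assumes "digraph V E" "S \<in> indep_sets V E" "(u, w) \<in> E" "u \<in> S"
  shows "classify V E S u \<in> {Source, Transit}" "classify V E S w \<in> {Out_nbr, Both_nbr}"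
proof -
  have "w \<notin> S" "w \<in> V" using indep_setD(3)[OF assms(2,4)] assms(3) digraph_edgeD[OF assms(1,3)] by auto
  then show "classify V E S u \<in> {Source, Transit}" "classify V E S w \<in> {Out_nbr, Both_nbr}"
    using assms(3,4) by (auto simp: classify_def Nout_def)
qed

lemma classify_in_edge:
  assumes "digraph V E" "S \<in> indep_sets V E" "(u, w) \<in> E" "w \<in> S"
  shows "classify V E S w \<in> {Sink, Transit}" "classify V E S u \<in> {In_nbr, Both_nbr}"
proof -
  have "u \<notin> S" "u \<in> V" using indep_setD(3)[OF assms(2) _ assms(4)] assms(3) digraph_edgeD[OF assms(1,3)] by auto
  then show "classify V E S w \<in> {Sink, Transit}" "classify V E S u \<in> {In_nbr, Both_nbr}"
    using assms(3,4) by (auto simp: classify_def Nin_def)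
qed

lemma hub_part_below: "in_hub k \<Longrightarrow> sz k \<le> h \<Longrightarrow> hub_part n sz k \<subseteq> {..<h}"
  by (auto simp: hub_part_def)

lemma hub_part_above: "\<not> in_hub k \<Longrightarrow> h + sz k \<le> n \<Longrightarrow> hub_part n sz k \<subseteq> {h..<n}"
  by (auto simp: hub_part_def)

lemma hub_incident_edge_in_rectangles:
  assumes H: "digraph V E" and S: "S \<in> indep_sets V E"
    and transit: "sz Transit \<le> min (sz Source) (sz Sink)"
    and both_nbr: "sz Both_nbr \<le> min (sz Out_nbr) (sz In_nbr)"
    and fits: "\<And>k. in_hub k \<Longrightarrow> sz k \<le> h" "\<And>k. \<not> in_hub k \<Longrightarrow> h + sz k \<le> n"
    and \<phi>: "\<phi> \<in> PiE V (\<lambda>w. hub_part n sz (classify V E S w))"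
    and e: "(u, w) \<in> incident_edges E S"
  shows "(\<phi> u, \<phi> w) \<in> hub_rectangles n sz \<and> \<phi> u \<noteq> \<phi> w"
proof -
  have uw: "(u, w) \<in> E" "u \<in> V" "w \<in> V" using e digraph_edgeD[OF H] by (auto simp: incident_edges_def)
  have "h \<le> n" using fits(2)[of Far] by simp
  have low: "hub_part n sz k \<subseteq> {..<h}" if "in_hub k" for k using that fits(1)[OF that] by (rule hub_part_below)
  have high: "hub_part n sz k \<subseteq> {h..<n}" if "\<not> in_hub k" for k using that fits(2)[OF that] by (rule hub_part_above)
  have \<phi>_in: "\<phi> x < sz (classify V E S x) \<and> \<phi> x < h" if "x \<in> V" "x \<in> S" for x
    using PiE_mem[OF \<phi> that(1)] that(2) low[of "classify V E S x"] by (auto simp: hub_part_def)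
  have \<phi>_out: "n - sz (classify V E S x) \<le> \<phi> x \<and> h \<le> \<phi> x \<and> \<phi> x < n" if "x \<in> V" "x \<notin> S" for x
    using PiE_mem[OF \<phi> that(1)] that(2) high[of "classify V E S x"] by (auto simp: hub_part_def)
  show ?thesis
  proof (cases "u \<in> S")
    case True
    have "w \<notin> S" using indep_setD(3)[OF S True] uw(1) by blast
    have "\<phi> u < sz Source \<and> \<phi> u < h"
      using \<phi>_in[OF uw(2) True] classify_out_edge(1)[OF H S uw(1) True] transit by auto
    moreover have "n - sz Out_nbr \<le> \<phi> w \<and> h \<le> \<phi> w \<and> \<phi> w < n"
      using \<phi>_out[OF uw(3) \<open>w \<notin> S\<close>] classify_out_edge(2)[OF H S uw(1) True] both_nbr by auto
    ultimately show ?thesis using \<open>h \<le> n\<close> by (auto simp: hub_rectangles_def)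
  next
    case False
    then have "w \<in> S" using e by (simp add: incident_edges_def)
    have "\<phi> w < sz Sink \<and> \<phi> w < h"
      using \<phi>_in[OF uw(3) \<open>w \<in> S\<close>] classify_in_edge(1)[OF H S uw(1) \<open>w \<in> S\<close>] transit by auto
    moreover have "n - sz In_nbr \<le> \<phi> u \<and> h \<le> \<phi> u \<and> \<phi> u < n"
      using \<phi>_out[OF uw(2) False] classify_in_edge(2)[OF H S uw(1) \<open>w \<in> S\<close>] both_nbr by auto
    ultimately show ?thesis using \<open>h \<le> n\<close> by (auto simp: hub_rectangles_def)
  qed
qed

text \<open>Every edge at S runs between the hub and the last columns, so it sees a planted entry 1; all
  other edges see at least q as long as their ends have distinct images.\<close>
lemma hub_weight_ge:
  assumes H: "digraph V E" and S: "S \<in> indep_sets V E" and q: "0 \<le> q" "q \<le> 1"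
    and transit: "sz Transit \<le> min (sz Source) (sz Sink)"
    and both_nbr: "sz Both_nbr \<le> min (sz Out_nbr) (sz In_nbr)"
    and fits: "\<And>k. in_hub k \<Longrightarrow> sz k \<le> h" "\<And>k. \<not> in_hub k \<Longrightarrow> h + sz k \<le> n"
    and \<phi>: "\<phi> \<in> PiE V (\<lambda>w. hub_part n sz (classify V E S w))"
    and distinct: "\<forall>e\<in>E - incident_edges E S. \<phi> (fst e) \<noteq> \<phi> (snd e)"
  shows "q ^ (card E - maxdeg V E * card S)
    \<le> (\<Prod>e\<in>E. planted_matrix (hub_rectangles n sz) q (\<phi> (fst e)) (\<phi> (snd e)))"
proof -
  have factor_le: "(if e \<in> incident_edges E S then 1 else q)
      \<le> planted_matrix (hub_rectangles n sz) q (\<phi> (fst e)) (\<phi> (snd e))" if "e \<in> E" for e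
  proof (cases "e \<in> incident_edges E S")
    case True
    then show ?thesis
      using hub_incident_edge_in_rectangles[OF H S transit both_nbr fits \<phi>, of "fst e" "snd e"]
      by (simp add: planted_matrix_def)
  qed (use distinct that q(2) in \<open>simp add: planted_matrix_def\<close>)
  have "incident_edges E S \<subseteq> E" by (auto simp: incident_edges_def)
  then have "card (E - incident_edges E S) = card E - maxdeg V E * card S"
    using card_incident_edges_indep[OF H S] digraph_finite_edges[OF H]
    by (simp add: card_Diff_subset finite_subset)
  then have "q ^ (card E - maxdeg V E * card S) = (\<Prod>e\<in>E. if e \<in> incident_edges E S then 1 else q)"
    using digraph_finite_edges[OF H] by (simp add: prod.If_cases Diff_eq Int_commute)
  also have "\<dots> \<le> (\<Prod>e\<in>E. planted_matrix (hub_rectangles n sz) q (\<phi> (fst e)) (\<phi> (snd e)))"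
    using factor_le q(1) by (intro prod_mono) auto
  finally show ?thesis .
qed

text \<open>Different S are separated at any vertex of their symmetric difference.\<close>
lemma hub_hom_sum_ge:
  assumes H: "digraph V E" and q: "0 \<le> q" "q \<le> 1"
    and transit: "sz Transit \<le> min (sz Source) (sz Sink)"
    and both_nbr: "sz Both_nbr \<le> min (sz Out_nbr) (sz In_nbr)"
    and fits: "\<And>k. in_hub k \<Longrightarrow> sz k \<le> h" "\<And>k. \<not> in_hub k \<Longrightarrow> h + sz k \<le> n"
  shows "(\<Sum>S\<in>indep_sets V E. q ^ (card E - maxdeg V E * card S) *
      ((\<Prod>w\<in>V. real (sz (classify V E S w))) *
       (1 - (\<Sum>e\<in>E - incident_edges E S. 1 / real (sz (classify V E S (snd e)))))))
     \<le> (\<Sum>\<phi>\<in>PiE V (\<lambda>_. {..<n}). \<Prod>e\<in>E.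
          planted_matrix (hub_rectangles n sz) q (\<phi> (fst e)) (\<phi> (snd e)))"
proof -
  let ?C = "\<lambda>S w. hub_part n sz (classify V E S w)"
  have "h \<le> n" using fits(2)[of Far] by simp
  have low: "hub_part n sz k \<subseteq> {..<h}" if "in_hub k" for k using that fits(1)[OF that] by (rule hub_part_below)
  have high: "hub_part n sz k \<subseteq> {h..<n}" if "\<not> in_hub k" for k using that fits(2)[OF that] by (rule hub_part_above)
  have separate: "hub_part n sz k \<inter> hub_part n sz k' = {}" if "in_hub k \<longleftrightarrow> \<not> in_hub k'" for k k'
  proof -
    have "hub_part n sz k \<inter> hub_part n sz k' \<subseteq> {..<h} \<inter> {h..<n}"
      using low high that by (cases "in_hub k") blast+
    moreover have "{..<h} \<inter> {h..<n} = {}" by auto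
    ultimately show ?thesis by blast
  qed
  have card_C: "card (?C S w) = sz (classify V E S w)" for S w
    using fits \<open>h \<le> n\<close> by (intro card_hub_part) (metis add_leD2 order_trans)
  have "(\<Sum>S\<in>indep_sets V E. q ^ (card E - maxdeg V E * card S) * ((\<Prod>w\<in>V. real (card (?C S w))) *
       (1 - (\<Sum>e\<in>E - incident_edges E S. 1 / real (card (?C S (snd e)))))))
     \<le> (\<Sum>\<phi>\<in>PiE V (\<lambda>_. {..<n}). \<Prod>e\<in>E. planted_matrix (hub_rectangles n sz) q (\<phi> (fst e)) (\<phi> (snd e)))"
  proof (rule hom_sum_ge_blocks[OF H indep_sets_finite[OF H]])
    show "0 \<le> planted_matrix (hub_rectangles n sz) q i j" for i j using q(1) by (rule planted_matrix_nonneg)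
    show "?C S w \<subseteq> {..<n}" for S w
      using low high \<open>h \<le> n\<close> by (cases "in_hub (classify V E S w)") fastforce+
    show "\<exists>w\<in>V. ?C S w \<inter> ?C S' w = {}"
      if S: "S \<in> indep_sets V E" "S' \<in> indep_sets V E" "S \<noteq> S'" for S S'
    proof -
      obtain w where "w \<in> V" "w \<in> S \<longleftrightarrow> w \<notin> S'"
        using S indep_setD(1) by blast
      then have "?C S w \<inter> ?C S' w = {}" by (intro separate) simp
      with \<open>w \<in> V\<close> show ?thesis by blast
    qed
    show "0 \<le> q ^ (card E - maxdeg V E * card S)" for S using q(1) by simp
    show "q ^ (card E - maxdeg V E * card S)
        \<le> (\<Prod>e\<in>E. planted_matrix (hub_rectangles n sz) q (\<phi> (fst e)) (\<phi> (snd e)))"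
      if "S \<in> indep_sets V E" "\<phi> \<in> PiE V (?C S)" "\<forall>e\<in>E - incident_edges E S. \<phi> (fst e) \<noteq> \<phi> (snd e)"
      for S \<phi>
      by (rule hub_weight_ge[OF H that(1) q transit both_nbr fits that(2,3)])
  qed
  then show ?thesis by (simp only: card_C)
qed

lemma hub_hom_density_ge:
  assumes H: "digraph V E" and "E \<noteq> {}" and q: "0 < q" "q \<le> 1" and "0 < n"
    and transit: "sz Transit \<le> min (sz Source) (sz Sink)"
    and both_nbr: "sz Both_nbr \<le> min (sz Out_nbr) (sz In_nbr)"
    and fits: "\<And>k. in_hub k \<Longrightarrow> sz k \<le> h" "\<And>k. \<not> in_hub k \<Longrightarrow> h + sz k \<le> n"
  shows "q ^ card E * (\<Sum>S\<in>indep_sets V E.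
      (\<Prod>w\<in>V. sz (classify V E S w) / (if w \<in> S then n * q ^ maxdeg V E else n)) *
      (1 - (\<Sum>e\<in>E - incident_edges E S. 1 / sz (classify V E S (snd e)))))
    \<le> hom_density V E n (planted_matrix (hub_rectangles n sz) q)"
proof -
  let ?D = "maxdeg V E"
  let ?err = "\<lambda>S. 1 - (\<Sum>e\<in>E - incident_edges E S. 1 / real (sz (classify V E S (snd e))))"
  have "finite V" using H by (simp add: digraph_def)
  have "q ^ card E * ((\<Prod>w\<in>V. sz (classify V E S w) / (if w \<in> S then n * q ^ ?D else n)) * ?err S)
      = q ^ (card E - ?D * card S) * ((\<Prod>w\<in>V. real (sz (classify V E S w))) * ?err S) / real n ^ card V"
    if S: "S \<in> indep_sets V E" for S
  proof -
    have "incident_edges E S \<subseteq> E" by (auto simp: incident_edges_def)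
    then have "?D * card S \<le> card E"
      using card_incident_edges_indep[OF H S] card_mono[OF digraph_finite_edges[OF H]] by metis
    then have q_split: "q ^ card E = q ^ (card E - ?D * card S) * (q ^ ?D) ^ card S"
      by (simp flip: power_add power_mult)
    have "V \<inter> S = S" using indep_setD(1)[OF S] by auto
    have "(\<Prod>w\<in>V. if w \<in> S then real n * q ^ ?D else real n) = (\<Prod>w\<in>V. n * (if w \<in> S then q ^ ?D else 1))"
      by (intro prod.cong) auto
    also have "\<dots> = real n ^ card V * (q ^ ?D) ^ card S"
      using \<open>finite V\<close> \<open>V \<inter> S = S\<close> by (simp add: prod.distrib prod.If_cases)
    finally have den: "(\<Prod>w\<in>V. if w \<in> S then real n * q ^ ?D else real n) = real n ^ card V * (q ^ ?D) ^ card S" .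
    show ?thesis
      using q \<open>0 < n\<close> by (simp add: prod_dividef den q_split)
  qed
  then have "q ^ card E * (\<Sum>S\<in>indep_sets V E.
      (\<Prod>w\<in>V. sz (classify V E S w) / (if w \<in> S then n * q ^ ?D else n)) * ?err S)
    = (\<Sum>S\<in>indep_sets V E. q ^ (card E - ?D * card S) * ((\<Prod>w\<in>V. real (sz (classify V E S w))) * ?err S))
      / real n ^ card V"
    by (simp add: sum_distrib_left sum_divide_distrib)
  also have "\<dots> \<le> hom_density V E n (planted_matrix (hub_rectangles n sz) q)"
    unfolding hom_density_def using hub_hom_sum_ge[OF H less_imp_le[OF q(1)] q(2) transit both_nbr fits]
    by (simp add: divide_right_mono)
  finally show ?thesis .
qed

section \<open>Growth and rounding of sequences\<close>

lemma filterlim_powr_mult_power_at_top: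
  fixes p :: "nat \<Rightarrow> real"
  assumes "0 < D" "\<forall>n. 0 < p n" and lim: "(\<lambda>n. real n powr (- c / real D) / p n) \<longlonglongrightarrow> 0"
  shows "filterlim (\<lambda>n. real n powr c * p n ^ D) at_top sequentially"
proof -
  let ?g = "\<lambda>n. real n powr (- c / real D) / p n"
  have "(\<lambda>n. ?g n ^ D) \<longlonglongrightarrow> 0 ^ D" by (rule tendsto_power[OF lim])
  then have "(\<lambda>n. ?g n ^ D) \<longlonglongrightarrow> 0" by (simp only: zero_power[OF assms(1)])
  moreover have "eventually (\<lambda>n. 0 < ?g n ^ D) sequentially"
    using eventually_gt_at_top[of 0] by eventually_elim (use assms(2) in simp)
  ultimately have inv: "filterlim (\<lambda>n. inverse (?g n ^ D)) at_top sequentially"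
    by (rule filterlim_inverse_at_top)
  have ev: "eventually (\<lambda>n. inverse (?g n ^ D) = real n powr c * p n ^ D) sequentially"
    using eventually_gt_at_top[of 0]
  proof eventually_elim
    case (elim n)
    have "(real n powr (- c / real D)) ^ D = real n powr (- c)"
      using elim assms(1) by (simp add: powr_power)
    then show ?case using elim assms(2) by (simp add: power_divide powr_minus field_simps)
  qed
  show ?thesis by (rule iffD1[OF filterlim_cong[OF refl refl ev] inv])
qed

lemma tendsto_powr_div_zero_mono:
  fixes p :: "nat \<Rightarrow> real"
  assumes "b \<le> a" "\<forall>n. 0 < p n" and lim: "(\<lambda>n. real n powr a / p n) \<longlonglongrightarrow> 0"
  shows "(\<lambda>n. real n powr b / p n) \<longlonglongrightarrow> 0"
proof (rule tendsto_sandwich[OF _ _ tendsto_const lim])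
  show "eventually (\<lambda>n. 0 \<le> real n powr b / p n) sequentially"
    using assms(2) by (intro always_eventually allI) (simp add: less_imp_le)
  show "eventually (\<lambda>n. real n powr b / p n \<le> real n powr a / p n) sequentially"
    using eventually_ge_at_top[of 1]
    by eventually_elim (use assms(1,2) in \<open>simp add: divide_right_mono less_imp_le powr_mono\<close>)
qed

lemma tendsto_div_of_bounded_diff:
  fixes f g M :: "nat \<Rightarrow> real"
  assumes M: "filterlim M at_top sequentially" and g: "(\<lambda>n. g n / M n) \<longlonglongrightarrow> L"
    and diff: "eventually (\<lambda>n. \<bar>f n - g n\<bar> \<le> 1) sequentially"
  shows "(\<lambda>n. f n / M n) \<longlonglongrightarrow> L"
proof (rule tendsto_sandwich)
  have "(\<lambda>n. 1 / M n) \<longlonglongrightarrow> 0"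
    using M by (intro tendsto_divide_0[OF tendsto_const] filterlim_at_top_imp_at_infinity)
  then show "(\<lambda>n. g n / M n - 1 / M n) \<longlonglongrightarrow> L" "(\<lambda>n. g n / M n + 1 / M n) \<longlonglongrightarrow> L"
    using tendsto_diff[OF g] tendsto_add[OF g] by fastforce+
  have "eventually (\<lambda>n. 0 < M n) sequentially" using M by (simp add: filterlim_at_top_dense)
  with diff have "eventually (\<lambda>n. g n / M n - 1 / M n \<le> f n / M n \<and> f n / M n \<le> g n / M n + 1 / M n)
      sequentially"
  proof eventually_elim
    case (elim n)
    then have "g n - 1 \<le> f n" "f n \<le> g n + 1" by linarith+
    then have "(g n - 1) / M n \<le> f n / M n" "f n / M n \<le> (g n + 1) / M n"
      using elim(2) by (simp_all add: divide_right_mono)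
    then show ?case by (simp add: diff_divide_distrib add_divide_distrib)
  qed
  then show "eventually (\<lambda>n. g n / M n - 1 / M n \<le> f n / M n) sequentially"
      "eventually (\<lambda>n. f n / M n \<le> g n / M n + 1 / M n) sequentially"
    by (auto elim: eventually_mono)
qed

lemma abs_nat_floor_diff_le: "0 \<le> x \<Longrightarrow> \<bar>real (nat \<lfloor>x\<rfloor>) - x\<bar> \<le> 1"
  by linarith

lemma abs_nat_ceiling_diff_le: "0 \<le> x \<Longrightarrow> \<bar>real (nat \<lceil>x\<rceil>) - x\<bar> \<le> 1"
  by linarith

lemma tendsto_nat_ceiling_div:
  fixes M :: "nat \<Rightarrow> real"
  assumes "0 \<le> c" "filterlim M at_top sequentially"
  shows "(\<lambda>n. real (nat \<lceil>c * M n\<rceil>) / M n) \<longlonglongrightarrow> c"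
proof (rule tendsto_div_of_bounded_diff[OF assms(2)])
  have "eventually (\<lambda>n. 0 < M n) sequentially" using assms(2) by (simp add: filterlim_at_top_dense)
  then have "eventually (\<lambda>n. c = c * M n / M n) sequentially" by eventually_elim simp
  then show "(\<lambda>n. c * M n / M n) \<longlonglongrightarrow> c" by (rule Lim_transform_eventually[OF tendsto_const])
  show "eventually (\<lambda>n. \<bar>real (nat \<lceil>c * M n\<rceil>) - c * M n\<bar> \<le> 1) sequentially"
    using \<open>eventually (\<lambda>n. 0 < M n) sequentially\<close>
    by eventually_elim (rule abs_nat_ceiling_diff_le, use assms(1) in simp)
qed

lemma tendsto_nat_floor_div:
  fixes N M :: "nat \<Rightarrow> real"
  assumes "0 \<le> c" "filterlim M at_top sequentially" "(\<lambda>n. N n / M n) \<longlonglongrightarrow> L" "\<forall>n. 0 \<le> N n"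
  shows "(\<lambda>n. real (nat \<lfloor>c * N n\<rfloor>) / M n) \<longlonglongrightarrow> c * L"
proof (rule tendsto_div_of_bounded_diff[OF assms(2)])
  show "(\<lambda>n. c * N n / M n) \<longlonglongrightarrow> c * L" using tendsto_mult[OF tendsto_const assms(3), of c] by simp
  show "eventually (\<lambda>n. \<bar>real (nat \<lfloor>c * N n\<rfloor>) - c * N n\<bar> \<le> 1) sequentially"
    using assms(1,4) by (intro always_eventually allI abs_nat_floor_diff_le) simp
qed

text \<open>For \<open>c = 0\<close> the sequence is constantly \<open>1 / 0 = 0\<close>.\<close>
lemma tendsto_inverse_nat_floor:
  fixes N :: "nat \<Rightarrow> real"
  assumes "0 \<le> c" "filterlim N at_top sequentially"
  shows "(\<lambda>n. 1 / real (nat \<lfloor>c * N n\<rfloor>)) \<longlonglongrightarrow> 0"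
proof (cases "c = 0")
  case False
  then have "filterlim (\<lambda>n. c * N n) at_top sequentially"
    using assms by (intro filterlim_tendsto_pos_mult_at_top[OF tendsto_const]) simp_all
  then have "filterlim (\<lambda>n. - 1 + c * N n) at_top sequentially"
    by (rule filterlim_tendsto_add_at_top[OF tendsto_const])
  moreover have "\<forall>n. - 1 + c * N n \<le> real (nat \<lfloor>c * N n\<rfloor>)" by (intro allI) linarith
  ultimately have "filterlim (\<lambda>n. real (nat \<lfloor>c * N n\<rfloor>)) at_top sequentially"
    by (rule filterlim_at_top_mono[OF _ always_eventually])
  then show ?thesis by (intro tendsto_divide_0[OF tendsto_const] filterlim_at_top_imp_at_infinity)
qed simp

lemma vanishing_fraction_complement:
  fixes h :: "nat \<Rightarrow> nat"
  assumes h: "(\<lambda>n. real (h n) / real n) \<longlonglongrightarrow> 0"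
  shows "eventually (\<lambda>n. h n \<le> n) sequentially"
    and "(\<lambda>n. real (n - h n) / real n) \<longlonglongrightarrow> 1"
    and "filterlim (\<lambda>n. real (n - h n)) at_top sequentially"
proof -
  show le: "eventually (\<lambda>n. h n \<le> n) sequentially"
    using order_tendstoD(2)[OF h zero_less_one] eventually_gt_at_top[of 0]
    by eventually_elim (simp add: divide_less_eq)
  show rest: "(\<lambda>n. real (n - h n) / real n) \<longlonglongrightarrow> 1"
  proof (rule Lim_transform_eventually)
    show "(\<lambda>n. 1 - real (h n) / real n) \<longlonglongrightarrow> 1" using tendsto_diff[OF tendsto_const h, of 1] by simp
    show "eventually (\<lambda>n. 1 - real (h n) / real n = real (n - h n) / real n) sequentially"
      using le eventually_gt_at_top[of 0] by eventually_elim (simp add: of_nat_diff diff_divide_distrib)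
  qed
  have "filterlim (\<lambda>n. real (n - h n) / real n * real n) at_top sequentially"
    by (rule filterlim_tendsto_pos_mult_at_top[OF rest]) (simp_all add: filterlim_real_sequentially)
  moreover have "eventually (\<lambda>n. real (n - h n) / real n * real n = real (n - h n)) sequentially"
    using eventually_gt_at_top[of 0] by eventually_elim simp
  ultimately show "filterlim (\<lambda>n. real (n - h n)) at_top sequentially"
    by (rule iffD1[OF filterlim_cong[OF refl refl], rotated])
qed

section \<open>Rates of the hub and clique constructions\<close>

lemma eventually_rate_le:
  fixes p LB K :: "nat \<Rightarrow> real" and R :: "nat \<Rightarrow> (nat \<times> nat) set"
  assumes p: "\<forall>n. 0 < p n \<and> p n < 1" and R: "\<And>n. finite (R n)"
    and LB: "LB \<longlonglongrightarrow> L" "1 + \<delta> < L"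
    and hom: "eventually (\<lambda>n. p n ^ card E * LB n \<le> hom_density V E n (planted_matrix (R n) (p n))) sequentially"
    and K: "K \<longlonglongrightarrow> c" "eventually (\<lambda>n. card (R n) \<le> K n * (real n ^ 2 * p n ^ maxdeg V E)) sequentially"
    and "c < c'"
  shows "eventually (\<lambda>n. rate V E \<delta> n (p n) \<le> c') sequentially"
  using hom K(2) order_tendstoD(1)[OF LB] order_tendstoD(2)[OF K(1) \<open>c < c'\<close>]
    eventually_gt_at_top[of 0]
proof eventually_elim
  case (elim n)
  have "0 < p n" "p n < 1" using p by auto
  have "(1 + \<delta>) * p n ^ card E \<le> LB n * p n ^ card E"
    using elim(3) \<open>0 < p n\<close> by (intro mult_right_mono) simp_all
  also have "\<dots> \<le> hom_density V E n (planted_matrix (R n) (p n))" using elim(1) by (simp add: mult.commute)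
  finally have "rate V E \<delta> n (p n) \<le> card (R n) / (real n ^ 2 * p n ^ maxdeg V E)"
    by (rule rate_le_planted[OF \<open>0 < p n\<close> \<open>p n < 1\<close> elim(5) R])
  also have "\<dots> \<le> K n" using elim(2) \<open>0 < p n\<close> elim(5) by (simp add: divide_le_eq)
  finally show ?case using elim(4) by simp
qed

definition hub_height :: "(vertex_class \<Rightarrow> real) \<Rightarrow> real \<Rightarrow> nat" where
  "hub_height w T = max (nat \<lceil>w Source * T\<rceil>) (nat \<lceil>w Sink * T\<rceil>)"

text \<open>Used with \<open>T = n p^\<Delta>\<close>: the classes of the hub get about \<open>w k n p^\<Delta>\<close> vertices, the others
  about \<open>w k n\<close>.\<close>
definition hub_size :: "(vertex_class \<Rightarrow> real) \<Rightarrow> real \<Rightarrow> nat \<Rightarrow> vertex_class \<Rightarrow> nat" where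
  "hub_size w T n k =
    (if in_hub k then nat \<lceil>w k * T\<rceil> else nat \<lfloor>w k * real (n - hub_height w T)\<rfloor>)"

lemma hub_size_fits:
  assumes "0 \<le> T" "\<And>k. 0 \<le> w k" "\<And>k. \<not> in_hub k \<Longrightarrow> w k \<le> 1"
    and "w Transit \<le> min (w Source) (w Sink)" "w Both_nbr \<le> min (w Out_nbr) (w In_nbr)"
    and "hub_height w T \<le> n"
  shows "hub_size w T n Transit \<le> min (hub_size w T n Source) (hub_size w T n Sink)"
    and "hub_size w T n Both_nbr \<le> min (hub_size w T n Out_nbr) (hub_size w T n In_nbr)"
    and "in_hub k \<Longrightarrow> hub_size w T n k \<le> hub_height w T"
    and "\<not> in_hub k \<Longrightarrow> hub_height w T + hub_size w T n k \<le> n"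
proof -
  let ?N = "real (n - hub_height w T)"
  have "nat \<lceil>w Transit * T\<rceil> \<le> nat \<lceil>w Source * T\<rceil>" "nat \<lceil>w Transit * T\<rceil> \<le> nat \<lceil>w Sink * T\<rceil>"
    using assms(1,4) by (intro nat_mono ceiling_mono mult_right_mono; simp)+
  then show "hub_size w T n Transit \<le> min (hub_size w T n Source) (hub_size w T n Sink)"
    by (simp add: hub_size_def)
  show "hub_size w T n Both_nbr \<le> min (hub_size w T n Out_nbr) (hub_size w T n In_nbr)"
    using assms(5) by (auto simp: hub_size_def intro!: nat_mono floor_mono mult_right_mono)
  show "hub_size w T n k \<le> hub_height w T" if "in_hub k"
  proof -
    have "hub_size w T n Source \<le> hub_height w T" "hub_size w T n Sink \<le> hub_height w T"
      unfolding hub_size_def hub_height_def in_hub.simps if_True by (rule max.cobounded1 max.cobounded2)+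
    with \<open>hub_size w T n Transit \<le> min _ _\<close> show ?thesis using that by (cases k) auto
  qed
  show "hub_height w T + hub_size w T n k \<le> n" if "\<not> in_hub k"
  proof -
    have "w k * ?N \<le> ?N" using assms(2)[of k] assms(3)[OF that] by (intro mult_left_le_one_le) simp_all
    then have "nat \<lfloor>w k * ?N\<rfloor> \<le> nat \<lfloor>?N\<rfloor>" by (intro nat_mono floor_mono)
    moreover have "hub_size w T n k = nat \<lfloor>w k * ?N\<rfloor>" using that by (simp add: hub_size_def)
    ultimately have "hub_size w T n k \<le> n - hub_height w T" by simp
    then show ?thesis using assms(6) by simp
  qed
qed

lemma hub_height_vanishing:
  fixes T :: "nat \<Rightarrow> real"
  assumes T: "filterlim T at_top sequentially" "(\<lambda>n. T n / real n) \<longlonglongrightarrow> 0" and w: "\<And>k. 0 \<le> w k"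
  shows "(\<lambda>n. real (hub_height w (T n)) / real n) \<longlonglongrightarrow> 0"
proof -
  define a where "a k n = real (nat \<lceil>w k * T n\<rceil>)" for k n
  have "(\<lambda>n. (a Source n / T n + a Sink n / T n) * (T n / n)) \<longlonglongrightarrow> (w Source + w Sink) * 0"
    unfolding a_def using w T by (intro tendsto_intros tendsto_nat_ceiling_div)
  then have bound: "(\<lambda>n. (a Source n / T n + a Sink n / T n) * (T n / n)) \<longlonglongrightarrow> 0" by simp
  have le: "real (hub_height w (T n)) / n \<le> (a Source n / T n + a Sink n / T n) * (T n / n)"
    if "0 < n" "0 < T n" for n
  proof -
    have "real (hub_height w (T n)) \<le> a Source n + a Sink n"
      unfolding hub_height_def a_def by (simp only: of_nat_max max.bounded_iff) simp
    then have "real (hub_height w (T n)) / n \<le> (a Source n + a Sink n) / n"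
      by (intro divide_right_mono) simp_all
    also have "\<dots> = (a Source n / T n + a Sink n / T n) * (T n / n)"
      using that by (simp add: field_simps)
    finally show ?thesis .
  qed
  have "eventually (\<lambda>n. 0 < n \<and> 0 < T n) sequentially"
    using eventually_gt_at_top[of 0] T(1)[unfolded filterlim_at_top_dense, rule_format, of 0]
    by eventually_elim simp
  then have "eventually (\<lambda>n. real (hub_height w (T n)) / n
      \<le> (a Source n / T n + a Sink n / T n) * (T n / n)) sequentially"
    by eventually_elim (rule le, simp_all)
  then show ?thesis by (intro tendsto_sandwich[OF _ _ tendsto_const bound]) simp_all
qed

lemma hub_size_asymptotics:
  fixes T :: "nat \<Rightarrow> real"
  assumes T: "filterlim T at_top sequentially" "(\<lambda>n. T n / real n) \<longlonglongrightarrow> 0" and w: "\<And>k. 0 \<le> w k"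
  shows "\<And>k. (\<lambda>n. hub_size w (T n) n k / (if in_hub k then T n else real n)) \<longlonglongrightarrow> w k"
    and "\<And>k. \<not> in_hub k \<Longrightarrow> (\<lambda>n. 1 / real (hub_size w (T n) n k)) \<longlonglongrightarrow> 0"
    and "eventually (\<lambda>n. hub_height w (T n) \<le> n) sequentially"
proof -
  note complement = vanishing_fraction_complement[OF hub_height_vanishing[OF T w]]
  show "eventually (\<lambda>n. hub_height w (T n) \<le> n) sequentially" by (rule complement(1))
  show "(\<lambda>n. hub_size w (T n) n k / (if in_hub k then T n else real n)) \<longlonglongrightarrow> w k" for k
  proof (cases "in_hub k")
    case True
    then show ?thesis using tendsto_nat_ceiling_div[OF w T(1), of k] by (simp add: hub_size_def)
  next
    case False
    then show ?thesis
      using tendsto_nat_floor_div[OF w filterlim_real_sequentially complement(2)] by (simp add: hub_size_def)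
  qed
  show "(\<lambda>n. 1 / real (hub_size w (T n) n k)) \<longlonglongrightarrow> 0" if "\<not> in_hub k" for k
    using tendsto_inverse_nat_floor[OF w complement(3)] that by (simp add: hub_size_def)
qed

lemma class_weight_nonneg:
  "0 \<le> x1 \<Longrightarrow> 0 \<le> x2 \<Longrightarrow> 0 \<le> y1 \<Longrightarrow> 0 \<le> y2 \<Longrightarrow> 0 \<le> class_weight x1 x2 y1 y2 k"
  by (cases k) simp_all

lemma class_weight_le_one:
  "0 \<le> y1 \<Longrightarrow> y1 \<le> 1 \<Longrightarrow> 0 \<le> y2 \<Longrightarrow> y2 \<le> 1 \<Longrightarrow> \<not> in_hub k \<Longrightarrow> class_weight x1 x2 y1 y2 k \<le> 1"
  by (cases k) (simp_all add: mult_le_one)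

lemma hub_lower_bound_tendsto:
  assumes H: "digraph V E" and "E \<noteq> {}"
    and ratio: "\<And>k. (\<lambda>n. real (sz n k) / (if in_hub k then T n else real n)) \<longlonglongrightarrow> class_weight x1 x2 y1 y2 k"
    and inverse: "\<And>k. \<not> in_hub k \<Longrightarrow> (\<lambda>n. 1 / real (sz n k)) \<longlonglongrightarrow> 0"
  shows "(\<lambda>n. \<Sum>S\<in>indep_sets V E.
      (\<Prod>w\<in>V. sz n (classify V E S w) / (if w \<in> S then T n else real n)) *
      (1 - (\<Sum>e\<in>E - incident_edges E S. 1 / sz n (classify V E S (snd e)))))
    \<longlonglongrightarrow> fH V E x1 x2 y1 y2"
proof -
  have "(\<lambda>n. (\<Prod>w\<in>V. sz n (classify V E S w) / (if w \<in> S then T n else real n)) *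
      (1 - (\<Sum>e\<in>E - incident_edges E S. 1 / sz n (classify V E S (snd e)))))
    \<longlonglongrightarrow> (\<Prod>w\<in>V. class_weight x1 x2 y1 y2 (classify V E S w)) * (1 - (\<Sum>e\<in>E - incident_edges E S. 0))"
    for S
  proof (intro tendsto_mult tendsto_prod tendsto_diff tendsto_const tendsto_sum)
    show "(\<lambda>n. sz n (classify V E S w) / (if w \<in> S then T n else real n))
        \<longlonglongrightarrow> class_weight x1 x2 y1 y2 (classify V E S w)" for w
      using ratio[of "classify V E S w"] by simp
    show "(\<lambda>n. 1 / real (sz n (classify V E S (snd e)))) \<longlonglongrightarrow> 0" if "e \<in> E - incident_edges E S" for e
      using that by (intro inverse) (simp add: incident_edges_def)
  qed
  then have "(\<lambda>n. \<Sum>S\<in>indep_sets V E.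
      (\<Prod>w\<in>V. sz n (classify V E S w) / (if w \<in> S then T n else real n)) *
      (1 - (\<Sum>e\<in>E - incident_edges E S. 1 / sz n (classify V E S (snd e)))))
    \<longlonglongrightarrow> (\<Sum>S\<in>indep_sets V E. \<Prod>w\<in>V. class_weight x1 x2 y1 y2 (classify V E S w))"
    by (intro tendsto_sum) simp
  also have "(\<Sum>S\<in>indep_sets V E. \<Prod>w\<in>V. class_weight x1 x2 y1 y2 (classify V E S w)) = fH V E x1 x2 y1 y2"
    by (simp add: fH_eq_sum_term prod_class_weight[OF H \<open>E \<noteq> {}\<close>])
  finally show ?thesis .
qed

lemma hub_rate:
  fixes p :: "nat \<Rightarrow> real"
  assumes H: "digraph V E" and "E \<noteq> {}"
    and p: "\<forall>n. 0 < p n \<and> p n < 1" "p \<longlonglongrightarrow> 0"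
    and T: "filterlim (\<lambda>n. real n * p n ^ maxdeg V E) at_top sequentially"
    and x: "0 \<le> x1" "0 \<le> x2" and y: "0 \<le> y1" "y1 \<le> 1" "0 \<le> y2" "y2 \<le> 1"
    and f: "1 + \<delta> < fH V E x1 x2 y1 y2" and cost: "x1 * y1 + x2 * y2 < c"
  shows "eventually (\<lambda>n. rate V E \<delta> n (p n) \<le> c) sequentially"
proof -
  define T where "T n = real n * p n ^ maxdeg V E" for n
  define w where "w = class_weight x1 x2 y1 y2"
  define sz where "sz n = hub_size w (T n) n" for n
  define ratio where "ratio n k = sz n k / (if in_hub k then T n else real n)" for n k
  have w: "0 \<le> w k" "\<not> in_hub k \<Longrightarrow> w k \<le> 1" for k
    unfolding w_def using x y by (simp_all add: class_weight_nonneg class_weight_le_one)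
  have w_trans: "w Transit \<le> min (w Source) (w Sink)" "w Both_nbr \<le> min (w Out_nbr) (w In_nbr)"
    using y by (simp_all add: w_def mult_le_one mult_left_le_one_le mult_left_le)
  have "(\<lambda>n. p n ^ maxdeg V E) \<longlonglongrightarrow> 0 ^ maxdeg V E" by (rule tendsto_power[OF p(2)])
  then have "(\<lambda>n. p n ^ maxdeg V E) \<longlonglongrightarrow> 0" by (simp only: zero_power[OF maxdeg_pos[OF H \<open>E \<noteq> {}\<close>]])
  moreover have "eventually (\<lambda>n. p n ^ maxdeg V E = T n / real n) sequentially"
    using eventually_gt_at_top[of 0] by eventually_elim (simp add: T_def)
  ultimately have "(\<lambda>n. T n / real n) \<longlonglongrightarrow> 0" by (rule Lim_transform_eventually)
  note sizes = hub_size_asymptotics[where w = w, OF T[folded T_def] this w(1)]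
  define LB where "LB n = (\<Sum>S\<in>indep_sets V E.
      (\<Prod>v\<in>V. sz n (classify V E S v) / (if v \<in> S then T n else real n)) *
      (1 - (\<Sum>e\<in>E - incident_edges E S. 1 / sz n (classify V E S (snd e)))))" for n
  have LB_lim: "LB \<longlonglongrightarrow> fH V E x1 x2 y1 y2"
    unfolding LB_def[abs_def]
    by (rule hub_lower_bound_tendsto[OF H \<open>E \<noteq> {}\<close>]) (use sizes in \<open>simp_all add: sz_def w_def\<close>)
  have hom: "eventually (\<lambda>n. p n ^ card E * LB n
      \<le> hom_density V E n (planted_matrix (hub_rectangles n (sz n)) (p n))) sequentially"
    using sizes(3) eventually_gt_at_top[of 0]
  proof eventually_elim
    case (elim n)
    have "0 \<le> T n" using p(1)[rule_format, of n] by (simp add: T_def)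
    note fits = hub_size_fits[OF \<open>0 \<le> T n\<close> w w_trans elim(1)]
    have "0 < p n" "p n \<le> 1" using p(1)[rule_format, of n] by simp_all
    from hub_hom_density_ge[OF H \<open>E \<noteq> {}\<close> this elim(2) fits[folded sz_def]]
    show ?case unfolding LB_def T_def .
  qed
  have cost_lim: "(\<lambda>n. ratio n Source * ratio n Out_nbr + ratio n In_nbr * ratio n Sink)
      \<longlonglongrightarrow> w Source * w Out_nbr + w In_nbr * w Sink"
    using sizes(1)[unfolded sz_def[symmetric] ratio_def[symmetric]] by (intro tendsto_intros)
  have card: "eventually (\<lambda>n. card (hub_rectangles n (sz n))
      \<le> (ratio n Source * ratio n Out_nbr + ratio n In_nbr * ratio n Sink) * (real n ^ 2 * p n ^ maxdeg V E))
      sequentially"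
    using eventually_gt_at_top[of 0]
  proof eventually_elim
    case (elim n)
    have "0 < T n" using elim p(1)[rule_format, of n] by (simp add: T_def)
    have "real (card (hub_rectangles n (sz n)))
        \<le> real (sz n Source) * sz n Out_nbr + real (sz n In_nbr) * sz n Sink"
      using card_hub_rectangles_le[of n "sz n"] by (simp flip: of_nat_mult of_nat_add)
    also have "\<dots> = (ratio n Source * ratio n Out_nbr + ratio n In_nbr * ratio n Sink) * (T n * real n)"
      using \<open>0 < T n\<close> elim by (simp add: ratio_def field_simps)
    finally show ?case by (simp add: T_def power2_eq_square mult_ac)
  qed
  have cost': "w Source * w Out_nbr + w In_nbr * w Sink < c" using cost by (simp add: w_def mult.commute)
  show ?thesis
    by (rule eventually_rate_le[OF p(1) _ LB_lim f hom cost_lim card cost']) (simp add: hub_rectangles_def)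
qed

text \<open>For regular H we have \<open>2 |E| = |V| \<Delta>\<close>, so the maps into a clique of size s contribute
  \<open>q^|E|\<close> times \<open>(s / (n sqrt (q^\<Delta>)))^|V|\<close> to the homomorphism density.\<close>
lemma clique_hom_density_ge:
  fixes s n :: nat
  assumes H: "digraph V E" and "V \<noteq> {}" and reg: "regular V E (maxdeg V E)"
    and q: "0 < q" "q \<le> 1" and "s \<le> n" "0 < n"
  shows "q ^ card E * ((real (n - s) / n) ^ card V * (1 - card E / real (n - s))
          + (real s / (n * sqrt (q ^ maxdeg V E))) ^ card V * (1 - card E / real s))
      \<le> hom_density V E n (planted_matrix ({..<s} \<times> {..<s}) q)"
proof -
  let ?v = "card V" and ?M = "real n * sqrt (q ^ maxdeg V E)"
  have "sqrt (q ^ maxdeg V E) ^ ?v = sqrt (q ^ (card E * 2))"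
    using handshake[OF H reg] by (simp add: real_sqrt_power power_mult[symmetric] mult.commute)
  also have "\<dots> = q ^ card E" using q(1) by (simp add: power_mult)
  finally have "sqrt (q ^ maxdeg V E) ^ ?v = q ^ card E" .
  then have clique: "(real s / ?M) ^ ?v * real n ^ ?v * q ^ card E = real s ^ ?v"
    using \<open>0 < n\<close> q(1) by (simp add: power_divide power_mult_distrib field_simps)
  have rest: "(real (n - s) / n) ^ ?v * real n ^ ?v = real (n - s) ^ ?v"
    using \<open>0 < n\<close> by (simp add: power_divide)
  have "q ^ card E * ((real (n - s) / n) ^ ?v * (1 - card E / real (n - s))
          + (real s / ?M) ^ ?v * (1 - card E / real s)) * real n ^ ?v
      = q ^ card E * ((real (n - s) / n) ^ ?v * real n ^ ?v) * (1 - card E / real (n - s))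
          + ((real s / ?M) ^ ?v * real n ^ ?v * q ^ card E) * (1 - card E / real s)"
    by (simp add: algebra_simps)
  also have "\<dots> = q ^ card E * real (n - s) ^ ?v * (1 - card E / real (n - s))
      + real s ^ ?v * (1 - card E / real s)"
    by (simp only: clique rest)
  also have "\<dots> \<le> real n ^ ?v * hom_density V E n (planted_matrix ({..<s} \<times> {..<s}) q)"
    using clique_hom_sum_ge[OF H \<open>V \<noteq> {}\<close> less_imp_le[OF q(1)] q(2) \<open>s \<le> n\<close>] \<open>0 < n\<close>
    by (simp add: hom_density_def mult.assoc)
  finally show ?thesis using \<open>0 < n\<close> by (simp add: mult.commute)
qed

lemma clique_rate:
  fixes p :: "nat \<Rightarrow> real"
  assumes H: "digraph V E" and "E \<noteq> {}" and reg: "regular V E (maxdeg V E)"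
    and p: "\<forall>n. 0 < p n \<and> p n < 1" "p \<longlonglongrightarrow> 0"
    and M: "filterlim (\<lambda>n. real n * sqrt (p n ^ maxdeg V E)) at_top sequentially"
    and "0 < c" "\<delta> < c ^ card V" "c\<^sup>2 < c'"
  shows "eventually (\<lambda>n. rate V E \<delta> n (p n) \<le> c') sequentially"
proof -
  define M where "M n = real n * sqrt (p n ^ maxdeg V E)" for n
  define s where "s n = nat \<lceil>c * M n\<rceil>" for n
  have "V \<noteq> {}" using H \<open>E \<noteq> {}\<close> by (auto simp: digraph_def)
  have M_top: "filterlim M at_top sequentially" using M by (simp add: M_def[abs_def])
  have s_M: "(\<lambda>n. real (s n) / M n) \<longlonglongrightarrow> c"
    unfolding s_def using \<open>0 < c\<close> M_top by (intro tendsto_nat_ceiling_div) simp_all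
  have s_top: "filterlim (\<lambda>n. real (s n)) at_top sequentially"
  proof (rule filterlim_at_top_mono)
    show "filterlim (\<lambda>n. c * M n) at_top sequentially"
      by (rule filterlim_tendsto_pos_mult_at_top[OF tendsto_const \<open>0 < c\<close> M_top])
    show "eventually (\<lambda>n. c * M n \<le> real (s n)) sequentially"
      by (intro always_eventually allI) (simp add: s_def, linarith)
  qed
  have "(\<lambda>n. p n ^ maxdeg V E) \<longlonglongrightarrow> 0 ^ maxdeg V E" by (rule tendsto_power[OF p(2)])
  then have "(\<lambda>n. p n ^ maxdeg V E) \<longlonglongrightarrow> 0" by (simp only: zero_power[OF maxdeg_pos[OF H \<open>E \<noteq> {}\<close>]])
  then have "(\<lambda>n. sqrt (p n ^ maxdeg V E)) \<longlonglongrightarrow> 0" using tendsto_real_sqrt by fastforce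
  then have "(\<lambda>n. real (s n) / M n * sqrt (p n ^ maxdeg V E)) \<longlonglongrightarrow> c * 0" by (intro tendsto_mult s_M)
  moreover have "eventually (\<lambda>n. real (s n) / M n * sqrt (p n ^ maxdeg V E) = real (s n) / real n)
      sequentially"
    using eventually_gt_at_top[of 0]
  proof eventually_elim
    case (elim n)
    then show ?case using p(1)[rule_format, of n] by (simp add: M_def)
  qed
  ultimately have "(\<lambda>n. real (s n) / real n) \<longlonglongrightarrow> 0" by (simp add: Lim_transform_eventually)
  note rest = vanishing_fraction_complement[OF this]
  define LB where "LB n = (real (n - s n) / n) ^ card V * (1 - card E / real (n - s n))
      + (real (s n) / M n) ^ card V * (1 - card E / real (s n))" for n
  have "LB \<longlonglongrightarrow> 1 ^ card V * (1 - 0) + c ^ card V * (1 - 0)"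
    unfolding LB_def[abs_def] using rest(3) s_top
    by (intro tendsto_intros rest(2) s_M tendsto_divide_0[OF tendsto_const] filterlim_at_top_imp_at_infinity)
  then have LB_lim: "LB \<longlonglongrightarrow> 1 + c ^ card V" by simp
  have hom: "eventually (\<lambda>n. p n ^ card E * LB n
      \<le> hom_density V E n (planted_matrix ({..<s n} \<times> {..<s n}) (p n))) sequentially"
    using rest(1) eventually_gt_at_top[of 0]
  proof eventually_elim
    case (elim n)
    have "0 < p n" "p n \<le> 1" using p(1)[rule_format, of n] by simp_all
    from clique_hom_density_ge[OF H \<open>V \<noteq> {}\<close> reg this elim]
    show ?case unfolding LB_def M_def .
  qed
  have cost_lim: "(\<lambda>n. (real (s n) / M n)\<^sup>2) \<longlonglongrightarrow> c\<^sup>2" by (intro tendsto_intros s_M)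
  have card: "eventually (\<lambda>n. card ({..<s n} \<times> {..<s n})
      \<le> (real (s n) / M n)\<^sup>2 * (real n ^ 2 * p n ^ maxdeg V E)) sequentially"
    using eventually_gt_at_top[of 0]
  proof eventually_elim
    case (elim n)
    have M2: "(M n)\<^sup>2 = real n ^ 2 * p n ^ maxdeg V E"
      using p(1)[rule_format, of n] by (simp add: M_def power_mult_distrib)
    have "0 < M n" using elim p(1)[rule_format, of n] by (simp add: M_def)
    then have "(real (s n) / M n)\<^sup>2 * (real n ^ 2 * p n ^ maxdeg V E) = real (s n) ^ 2"
      unfolding M2[symmetric] by (simp add: power_divide)
    then show ?case by (simp add: card_cartesian_product power2_eq_square)
  qed
  show ?thesis
    by (rule eventually_rate_le[OF p(1) _ LB_lim _ hom cost_lim card \<open>c\<^sup>2 < c'\<close>])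
      (use \<open>\<delta> < c ^ card V\<close> in simp_all)
qed

lemma exists_feasible_near_FH:
  assumes H: "digraph V E" and "E \<noteq> {}" "0 < \<delta>" "0 < \<epsilon>"
  obtains x1 x2 y1 y2 where "0 \<le> x1" "0 \<le> x2" "0 \<le> y1" "y1 \<le> 1" "0 \<le> y2" "y2 \<le> 1"
    "fH V E x1 x2 y1 y2 = 1 + \<delta>" "x1 * y1 + x2 * y2 < FH V E \<delta> + \<epsilon>"
proof -
  let ?T = "{x1 * y1 + x2 * y2 | x1 x2 y1 y2.
      x1 \<ge> 0 \<and> x2 \<ge> 0 \<and> 0 \<le> y1 \<and> y1 \<le> 1 \<and> 0 \<le> y2 \<and> y2 \<le> 1 \<and> fH V E x1 x2 y1 y2 = 1 + \<delta>}"
  obtain a1 a2 where "0 \<le> a1" "0 \<le> a2" "fH V E a1 a2 1 1 = 1 + \<delta>"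
    using exists_fH_eq_at_one[OF H \<open>E \<noteq> {}\<close> \<open>0 < \<delta>\<close>] .
  then have "a1 * 1 + a2 * 1 \<in> ?T" by fastforce
  then have "?T \<noteq> {}" by blast
  moreover have "Inf ?T < FH V E \<delta> + \<epsilon>" using \<open>0 < \<epsilon>\<close> by (simp add: FH_def)
  ultimately obtain b where "b \<in> ?T" "b < FH V E \<delta> + \<epsilon>" by (rule cInf_lessD[elim_format]) blast
  then show ?thesis using that by blast
qed

lemma rate_le_FH:
  fixes p :: "nat \<Rightarrow> real"
  assumes H: "digraph V E" and "E \<noteq> {}" "0 < \<delta>"
    and p: "\<forall>n. 0 < p n \<and> p n < 1" "p \<longlonglongrightarrow> 0"
    and lim: "(\<lambda>n. real n powr (- 1 / real (maxdeg V E)) / p n) \<longlonglongrightarrow> 0" and "0 < \<epsilon>"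
  shows "eventually (\<lambda>n. rate V E \<delta> n (p n) \<le> FH V E \<delta> + \<epsilon>) sequentially"
proof -
  have "\<forall>n. 0 < p n" using p(1) by simp
  from filterlim_powr_mult_power_at_top[OF maxdeg_pos[OF H \<open>E \<noteq> {}\<close>] this lim]
  have "filterlim (\<lambda>n. real n powr 1 * p n ^ maxdeg V E) at_top sequentially" .
  then have T: "filterlim (\<lambda>n. real n * p n ^ maxdeg V E) at_top sequentially" by simp
  have "0 < \<epsilon> / 2" using \<open>0 < \<epsilon>\<close> by simp
  then obtain x1 x2 y1 y2 where x: "0 \<le> x1" "0 \<le> x2" and y: "0 \<le> y1" "y1 \<le> 1" "0 \<le> y2" "y2 \<le> 1"
    and feasible: "fH V E x1 x2 y1 y2 = 1 + \<delta>" and near: "x1 * y1 + x2 * y2 < FH V E \<delta> + \<epsilon> / 2"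
    by (rule exists_feasible_near_FH[OF H \<open>E \<noteq> {}\<close> \<open>0 < \<delta>\<close>])
  define c0 where "c0 = x1 * y1 + x2 * y2"
  have "0 \<le> c0" using x y by (simp add: c0_def)
  text \<open>Blowing up the \<open>x\<^sub>i\<close> by a factor slightly above 1 makes the constraint strict at a small
    extra cost.\<close>
  define l where "l = 1 + \<epsilon> / (2 * (c0 + 1))"
  have "1 < l" using \<open>0 < \<epsilon>\<close> \<open>0 \<le> c0\<close> by (simp add: l_def)
  have "1 + \<delta> < 1 + l * \<delta>" using \<open>1 < l\<close> \<open>0 < \<delta>\<close> by simp
  also have "\<dots> \<le> fH V E (l * x1) (l * x2) y1 y2"
    using fH_superlinear[OF H \<open>E \<noteq> {}\<close> less_imp_le[OF \<open>1 < l\<close>] x y(1,3)] feasible by simp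
  finally have strict: "1 + \<delta> < fH V E (l * x1) (l * x2) y1 y2" .
  have "\<epsilon> * c0 / (2 * (c0 + 1)) < \<epsilon> / 2" using \<open>0 < \<epsilon>\<close> \<open>0 \<le> c0\<close> by (simp add: field_simps)
  moreover have "l * c0 = c0 + \<epsilon> * c0 / (2 * (c0 + 1))" using \<open>0 \<le> c0\<close> by (simp add: l_def field_simps)
  ultimately have "l * c0 < FH V E \<delta> + \<epsilon>" using near[folded c0_def] by linarith
  then have cost: "l * x1 * y1 + l * x2 * y2 < FH V E \<delta> + \<epsilon>" by (simp add: c0_def algebra_simps)
  show ?thesis
    by (rule hub_rate[OF H \<open>E \<noteq> {}\<close> p T _ _ y strict cost]) (use x \<open>1 < l\<close> in simp_all)
qed

lemma exists_clique_scale: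
  assumes "0 < \<delta>" "0 < \<epsilon>" "0 < v"
  obtains c :: real where "0 < c" "\<delta> < c ^ v" "c\<^sup>2 < \<delta> powr (2 / real v) + \<epsilon>"
proof -
  define c0 where "c0 = \<delta> powr (1 / real v)"
  have "0 < c0" using assms(1) by (simp add: c0_def)
  have c0_v: "c0 ^ v = \<delta>" using assms by (simp add: c0_def powr_realpow[symmetric] powr_powr)
  have c0_2: "c0\<^sup>2 = \<delta> powr (2 / real v)"
    using assms by (simp add: c0_def powr_realpow[symmetric] powr_powr)
  have "((\<lambda>c. c\<^sup>2) \<longlongrightarrow> c0\<^sup>2) (at_right c0)" by (intro tendsto_intros)
  then have "eventually (\<lambda>c. c\<^sup>2 < c0\<^sup>2 + \<epsilon>) (at_right c0)"
    by (rule order_tendstoD) (use assms(2) in simp)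
  then obtain b where "c0 < b" and b: "\<And>c. c0 < c \<Longrightarrow> c < b \<Longrightarrow> c\<^sup>2 < c0\<^sup>2 + \<epsilon>"
    unfolding eventually_at_right_field by blast
  define c where "c = (c0 + b) / 2"
  have "c0 < c" "c < b" using \<open>c0 < b\<close> by (simp_all add: c_def)
  moreover have "\<delta> < c ^ v" using power_strict_mono[OF \<open>c0 < c\<close> less_imp_le[OF \<open>0 < c0\<close>] \<open>0 < v\<close>] c0_v by simp
  ultimately show ?thesis
    by (intro that[of c]) (use \<open>0 < c0\<close> b c0_2 in auto)
qed

lemma rate_le_delta_powr:
  fixes p :: "nat \<Rightarrow> real"
  assumes H: "digraph V E" and "E \<noteq> {}" "0 < \<delta>" and reg: "regular V E (maxdeg V E)"
    and p: "\<forall>n. 0 < p n \<and> p n < 1" "p \<longlonglongrightarrow> 0"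
    and lim: "(\<lambda>n. real n powr (- 2 / real (maxdeg V E)) / p n) \<longlonglongrightarrow> 0" and "0 < \<epsilon>"
  shows "eventually (\<lambda>n. rate V E \<delta> n (p n) \<le> \<delta> powr (2 / real (card V)) + \<epsilon>) sequentially"
proof -
  have "\<forall>n. 0 < p n" using p(1) by simp
  from filterlim_powr_mult_power_at_top[OF maxdeg_pos[OF H \<open>E \<noteq> {}\<close>] this lim]
  have "filterlim (\<lambda>n. real n powr 2 * p n ^ maxdeg V E) at_top sequentially" .
  then have "filterlim (\<lambda>n. sqrt (real n powr 2 * p n ^ maxdeg V E)) at_top sequentially"
    by (rule filterlim_compose[OF sqrt_at_top])
  moreover have "sqrt (real n powr 2 * p n ^ maxdeg V E) = real n * sqrt (p n ^ maxdeg V E)" for n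
    by (cases "n = 0") (simp_all add: real_sqrt_mult powr_realpow)
  ultimately have M: "filterlim (\<lambda>n. real n * sqrt (p n ^ maxdeg V E)) at_top sequentially" by simp
  have "0 < card V" using H \<open>E \<noteq> {}\<close> by (auto simp: digraph_def card_gt_0_iff)
  obtain c where "0 < c" "\<delta> < c ^ card V" "c\<^sup>2 < \<delta> powr (2 / real (card V)) + \<epsilon>"
    using exists_clique_scale[OF \<open>0 < \<delta>\<close> \<open>0 < \<epsilon>\<close> \<open>0 < card V\<close>] .
  then show ?thesis using clique_rate[OF H \<open>E \<noteq> {}\<close> reg p M] by blast
qed

theorem theorem1p4:
  fixes V :: "'v set" and E :: "('v \<times> 'v) set" and \<delta> :: real
  assumes H: "digraph V E"
    and nonempty_edges: "E \<noteq> {}"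
    and delta_pos: "\<delta> > 0"
  shows
    "(\<forall>p :: nat \<Rightarrow> real.
        (\<forall>n. 0 < p n \<and> p n < 1) \<and>
        ((\<lambda>n. real n powr (- 1 / real (maxdeg V E)) / p n) \<longlonglongrightarrow> 0) \<and>
        (p \<longlonglongrightarrow> 0)
      \<longrightarrow> (\<forall>\<epsilon>>0. eventually (\<lambda>n. rate V E \<delta> n (p n) \<le> FH V E \<delta> + \<epsilon>) sequentially))
   \<and> FH_edge V E \<delta> = FH V E \<delta>
   \<and> (connected_digraph V E \<and> regular V E (maxdeg V E) \<longrightarrow>
       (\<forall>p :: nat \<Rightarrow> real.
        (\<forall>n. 0 < p n \<and> p n < 1) \<and>
        ((\<lambda>n. real n powr (- 2 / real (maxdeg V E)) / p n) \<longlonglongrightarrow> 0) \<and>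
        (p \<longlonglongrightarrow> 0)
      \<longrightarrow> (\<forall>\<epsilon>>0. eventually (\<lambda>n. rate V E \<delta> n (p n) \<le> \<delta> powr (2 / real (card V)) + \<epsilon>)
              sequentially)))
   \<and> (connected_digraph V E \<and> regular V E (maxdeg V E) \<longrightarrow>
       (\<forall>p :: nat \<Rightarrow> real.
        (\<forall>n. 0 < p n \<and> p n < 1) \<and>
        ((\<lambda>n. real n powr (- 1 / real (maxdeg V E)) / p n) \<longlonglongrightarrow> 0) \<and>
        (p \<longlonglongrightarrow> 0)
      \<longrightarrow> (\<forall>\<epsilon>>0. eventually (\<lambda>n. rate V E \<delta> n (p n)
              \<le> min (FH V E \<delta>) (\<delta> powr (2 / real (card V))) + \<epsilon>) sequentially)))"
proof (intro conjI impI allI)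
  fix p :: "nat \<Rightarrow> real" and \<epsilon> :: real
  assume "(\<forall>n. 0 < p n \<and> p n < 1) \<and> (\<lambda>n. real n powr (- 1 / real (maxdeg V E)) / p n) \<longlonglongrightarrow> 0
    \<and> p \<longlonglongrightarrow> 0" and "0 < \<epsilon>"
  then show "eventually (\<lambda>n. rate V E \<delta> n (p n) \<le> FH V E \<delta> + \<epsilon>) sequentially"
    by (elim conjE) (rule rate_le_FH[OF H nonempty_edges delta_pos])
next
  show "FH_edge V E \<delta> = FH V E \<delta>" by (rule FH_edge_eq_FH[OF H nonempty_edges delta_pos])
next
  fix p :: "nat \<Rightarrow> real" and \<epsilon> :: real
  assume "connected_digraph V E \<and> regular V E (maxdeg V E)"
    and "(\<forall>n. 0 < p n \<and> p n < 1) \<and> (\<lambda>n. real n powr (- 2 / real (maxdeg V E)) / p n) \<longlonglongrightarrow> 0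
      \<and> p \<longlonglongrightarrow> 0" and "0 < \<epsilon>"
  then show "eventually (\<lambda>n. rate V E \<delta> n (p n) \<le> \<delta> powr (2 / real (card V)) + \<epsilon>) sequentially"
    by (elim conjE) (rule rate_le_delta_powr[OF H nonempty_edges delta_pos])
next
  fix p :: "nat \<Rightarrow> real" and \<epsilon> :: real
  assume "connected_digraph V E \<and> regular V E (maxdeg V E)"
    and "(\<forall>n. 0 < p n \<and> p n < 1) \<and> (\<lambda>n. real n powr (- 1 / real (maxdeg V E)) / p n) \<longlonglongrightarrow> 0
      \<and> p \<longlonglongrightarrow> 0" and "0 < \<epsilon>"
  then have reg: "regular V E (maxdeg V E)" and p: "\<forall>n. 0 < p n \<and> p n < 1" "p \<longlonglongrightarrow> 0"
    and lim: "(\<lambda>n. real n powr (- 1 / real (maxdeg V E)) / p n) \<longlonglongrightarrow> 0" by simp_all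
  have "- 2 / real (maxdeg V E) \<le> - 1 / real (maxdeg V E)" by (intro divide_right_mono) simp_all
  moreover have "\<forall>n. 0 < p n" using p(1) by simp
  ultimately have "(\<lambda>n. real n powr (- 2 / real (maxdeg V E)) / p n) \<longlonglongrightarrow> 0"
    using lim by (rule tendsto_powr_div_zero_mono)
  then have "eventually (\<lambda>n. rate V E \<delta> n (p n) \<le> \<delta> powr (2 / real (card V)) + \<epsilon>) sequentially"
    by (rule rate_le_delta_powr[OF H nonempty_edges delta_pos reg p _ \<open>0 < \<epsilon>\<close>])
  moreover have "eventually (\<lambda>n. rate V E \<delta> n (p n) \<le> FH V E \<delta> + \<epsilon>) sequentially"
    by (rule rate_le_FH[OF H nonempty_edges delta_pos p lim \<open>0 < \<epsilon>\<close>])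
  ultimately show "eventually (\<lambda>n. rate V E \<delta> n (p n) \<le> min (FH V E \<delta>) (\<delta> powr (2 / real (card V))) + \<epsilon>)
      sequentially"
    by eventually_elim (simp add: min_def)
qed

end
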